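(* Let $X$, $A$, $B$, $C$, $\varepsilon$ be as in the context, and assume in addition that $A=A_0+\varepsilon$ where $A_0$ is a densely defined linear positive self-adjoint operator in $X$, and that $C=-\varepsilon$ (restricted to $D(A^{1/2})$). Let $T_\pm$ be the semigroups generated by $G_\pm$. Then $|T_\pm(t)|\leqslant e\,\varepsilon^{1/2}\,t\,\exp(\mu_Bt)$ for all $t\geqslant\varepsilon^{-1/2}$, where $\mu_B:=0$ if $B$ is symmetric and $\mu_B:=\|B\|$ if $B$ is bounded.
   Context: $(X,\langle\cdot|\cdot\rangle)$ is a nontrivial complex Hilbert space with norm $\|\cdot\|$. $A:D(A)\to X$ is a densely defined self-adjoint linear operator with $\langle\xi|A\xi\rangle\geqslant\varepsilon\langle\xi|\xi\rangle$ for all $\xi\in D(A)$ for some $\varepsilon>0$; $A^{1/2}$ is its positive self-adjoint square root. $B:D(A^{1/2})\to X$ is linear with $\|B\xi\|^2\leqslant a^2\|A^{1/2}\xi\|^2+b^2\|\xi\|^2$ for all $\xi\in D(A^{1/2})$, for some $a\in[0,1)$, $b\in\mathbb{R}$, and $B$ is symmetric or bounded. $Y:=D(A^{1/2})\times X$ with inner product $(\xi|\eta):=\langle A^{1/2}\xi_1|A^{1/2}\eta_1\rangle+\langle\xi_2|\eta_2\rangle$ and norm $|\cdot|$ (also for operator norms on $Y$). $H:D(A)\times D(A^{1/2})\to Y$, $H\xi:=(-i\xi_2,iA\xi_1)$; $\hat B:D(H)\to Y$, $\hat B\xi:=(0,-B\xi_2)$; $V:Y\to Y$, $V\xi:=(0,iC\xi_1)$;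 $G_+:=-i(H+\hat B+V)$, $G_-:=i(H+\hat B+V)$. $T_\pm$ is the strongly continuous semigroup with $T_\pm(t)=e^{-tG_\pm}$, $t\geqslant0$ (i.e. $\frac{d}{dt}T_\pm(t)\xi=-G_\pm T_\pm(t)\xi$ for $\xi\in D(H)$). *)

theory Defs
  imports "HOL-Analysis.Analysis"
begin

text \<open>A complex Hilbert space is given explicitly: a carrier type 'x (an abelian
group), a complex scalar multiplication sm, and an inner product ip which is
conjugate-linear in the first and linear in the second argument (bra-ket
convention as in the paper).\<close>

definition hnorm :: "('x \<Rightarrow> 'x \<Rightarrow> complex) \<Rightarrow> 'x \<Rightarrow> real" where
  "hnorm ip x = sqrt (Re (ip x x))"

definition complex_hilbert ::
  "(complex \<Rightarrow> 'x::ab_group_add \<Rightarrow> 'x) \<Rightarrow> ('x \<Rightarrow> 'x \<Rightarrow> complex) \<Rightarrow> bool" where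
  "complex_hilbert sm ip \<longleftrightarrow>
     (\<forall>a x y. sm a (x + y) = sm a x + sm a y) \<and>
     (\<forall>a b x. sm (a + b) x = sm a x + sm b x) \<and>
     (\<forall>a b x. sm a (sm b x) = sm (a * b) x) \<and>
     (\<forall>x. sm 1 x = x) \<and>
     (\<forall>x y z. ip x (y + z) = ip x y + ip x z) \<and>
     (\<forall>a x y. ip x (sm a y) = a * ip x y) \<and>
     (\<forall>x y. ip y x = cnj (ip x y)) \<and>
     (\<forall>x. 0 \<le> Re (ip x x)) \<and>
     (\<forall>x. ip x x = 0 \<longrightarrow> x = 0) \<and>
     (\<forall>s::nat \<Rightarrow> 'x. (\<forall>e>0. \<exists>N. \<forall>m\<ge>N. \<forall>n\<ge>N. hnorm ip (s m - s n) < e) \<longrightarrow>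
         (\<exists>l. \<forall>e>0. \<exists>N. \<forall>n\<ge>N. hnorm ip (s n - l) < e))"

definition lin_subspace :: "(complex \<Rightarrow> 'x::ab_group_add \<Rightarrow> 'x) \<Rightarrow> 'x set \<Rightarrow> bool" where
  "lin_subspace sm D \<longleftrightarrow> 0 \<in> D \<and> (\<forall>x\<in>D. \<forall>y\<in>D. x + y \<in> D) \<and> (\<forall>a. \<forall>x\<in>D. sm a x \<in> D)"

definition linear_op :: "(complex \<Rightarrow> 'x::ab_group_add \<Rightarrow> 'x) \<Rightarrow> 'x set \<Rightarrow> ('x \<Rightarrow> 'x) \<Rightarrow> bool" where
  "linear_op sm D f \<longleftrightarrow> lin_subspace sm D \<and>
     (\<forall>x\<in>D. \<forall>y\<in>D. f (x + y) = f x + f y) \<and> (\<forall>a. \<forall>x\<in>D. f (sm a x) = sm a (f x))"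

definition dense_in :: "('x \<Rightarrow> 'x \<Rightarrow> complex) \<Rightarrow> 'x::ab_group_add set \<Rightarrow> bool" where
  "dense_in ip D \<longleftrightarrow> (\<forall>x. \<forall>e>0. \<exists>y\<in>D. hnorm ip (x - y) < e)"

definition adj_dom :: "('x \<Rightarrow> 'x \<Rightarrow> complex) \<Rightarrow> 'x set \<Rightarrow> ('x \<Rightarrow> 'x) \<Rightarrow> 'x set" where
  "adj_dom ip D f = {\<eta>. \<exists>\<zeta>. \<forall>\<xi>\<in>D. ip \<eta> (f \<xi>) = ip \<zeta> \<xi>}"

definition self_adjoint ::
  "(complex \<Rightarrow> 'x::ab_group_add \<Rightarrow> 'x) \<Rightarrow> ('x \<Rightarrow> 'x \<Rightarrow> complex) \<Rightarrow> 'x set \<Rightarrow> ('x \<Rightarrow> 'x) \<Rightarrow> bool" where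
  "self_adjoint sm ip D f \<longleftrightarrow> linear_op sm D f \<and> dense_in ip D \<and>
     adj_dom ip D f = D \<and> (\<forall>\<xi>\<in>D. \<forall>\<eta>\<in>D. ip \<eta> (f \<xi>) = ip (f \<eta>) \<xi>)"

definition positive_op :: "('x \<Rightarrow> 'x \<Rightarrow> complex) \<Rightarrow> 'x set \<Rightarrow> ('x \<Rightarrow> 'x) \<Rightarrow> bool" where
  "positive_op ip D f \<longleftrightarrow> (\<forall>\<xi>\<in>D. ip \<xi> (f \<xi>) \<in> \<real> \<and> 0 \<le> Re (ip \<xi> (f \<xi>)))"

text \<open>(DS, S) is the positive self-adjoint square root of (DA, A).  By uniqueness of
the positive square root this determines A^(1/2).\<close>
definition is_pos_sqrt ::
  "(complex \<Rightarrow> 'x::ab_group_add \<Rightarrow> 'x) \<Rightarrow> ('x \<Rightarrow> 'x \<Rightarrow> complex) \<Rightarrow> 'x set \<Rightarrow> ('x \<Rightarrow> 'x)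
     \<Rightarrow> 'x set \<Rightarrow> ('x \<Rightarrow> 'x) \<Rightarrow> bool" where
  "is_pos_sqrt sm ip DS S DA A \<longleftrightarrow> self_adjoint sm ip DS S \<and> positive_op ip DS S \<and>
     DA = {\<xi>\<in>DS. S \<xi> \<in> DS} \<and> (\<forall>\<xi>\<in>DA. S (S \<xi>) = A \<xi>)"

definition symmetric_on :: "('x \<Rightarrow> 'x \<Rightarrow> complex) \<Rightarrow> 'x set \<Rightarrow> ('x \<Rightarrow> 'x) \<Rightarrow> bool" where
  "symmetric_on ip D B \<longleftrightarrow> (\<forall>\<xi>\<in>D. \<forall>\<eta>\<in>D. ip (B \<xi>) \<eta> = ip \<xi> (B \<eta>))"

definition bounded_on :: "('x \<Rightarrow> 'x \<Rightarrow> complex) \<Rightarrow> 'x set \<Rightarrow> ('x \<Rightarrow> 'x) \<Rightarrow> bool" where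
  "bounded_on ip D B \<longleftrightarrow> (\<exists>M. \<forall>\<xi>\<in>D. hnorm ip (B \<xi>) \<le> M * hnorm ip \<xi>)"

definition op_norm :: "('x \<Rightarrow> 'x \<Rightarrow> complex) \<Rightarrow> 'x set \<Rightarrow> ('x \<Rightarrow> 'x) \<Rightarrow> real" where
  "op_norm ip D B = Sup {hnorm ip (B \<xi>) | \<xi>. \<xi> \<in> D \<and> hnorm ip \<xi> \<le> 1}"

text \<open>The energy space Y = D(A^(1/2)) \<times> X with its norm.\<close>
definition Yset :: "'x set \<Rightarrow> ('x \<times> 'x) set" where
  "Yset DS = DS \<times> UNIV"

definition Ynorm :: "('x \<Rightarrow> 'x \<Rightarrow> complex) \<Rightarrow> ('x \<Rightarrow> 'x) \<Rightarrow> 'x \<times> 'x \<Rightarrow> real" where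
  "Ynorm ip S \<xi> = sqrt ((hnorm ip (S (fst \<xi>)))\<^sup>2 + (hnorm ip (snd \<xi>))\<^sup>2)"

definition Ysm :: "(complex \<Rightarrow> 'x \<Rightarrow> 'x) \<Rightarrow> complex \<Rightarrow> 'x \<times> 'x \<Rightarrow> 'x \<times> 'x" where
  "Ysm sm c \<xi> = (sm c (fst \<xi>), sm c (snd \<xi>))"

text \<open>H, \<hat>B, V and G_+ = -i(H + \<hat>B + V), G_- = i(H + \<hat>B + V), as maps on pairs
(meaningful on D(H) = D(A) \<times> D(A^(1/2))).\<close>
definition Hop :: "(complex \<Rightarrow> 'x \<Rightarrow> 'x) \<Rightarrow> ('x \<Rightarrow> 'x) \<Rightarrow> 'x \<times> 'x \<Rightarrow> 'x \<times> 'x" where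
  "Hop sm A \<xi> = (sm (- \<i>) (snd \<xi>), sm \<i> (A (fst \<xi>)))"

definition Bhat :: "('x::ab_group_add \<Rightarrow> 'x) \<Rightarrow> 'x \<times> 'x \<Rightarrow> 'x \<times> 'x" where
  "Bhat B \<xi> = (0, - B (snd \<xi>))"

definition Vop :: "(complex \<Rightarrow> 'x::ab_group_add \<Rightarrow> 'x) \<Rightarrow> ('x \<Rightarrow> 'x) \<Rightarrow> 'x \<times> 'x \<Rightarrow> 'x \<times> 'x" where
  "Vop sm C \<xi> = (0, sm \<i> (C (fst \<xi>)))"

definition Gop :: "(complex \<Rightarrow> 'x::ab_group_add \<Rightarrow> 'x) \<Rightarrow> complex \<Rightarrow> ('x \<Rightarrow> 'x) \<Rightarrow> ('x \<Rightarrow> 'x)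
     \<Rightarrow> ('x \<Rightarrow> 'x) \<Rightarrow> 'x \<times> 'x \<Rightarrow> 'x \<times> 'x" where
  "Gop sm c A B C \<xi> = Ysm sm c (Hop sm A \<xi> + Bhat B \<xi> + Vop sm C \<xi>)"

text \<open>T is the strongly continuous semigroup on Y (norm Ynorm) whose generator is
exactly -G with domain DG, i.e. T(t) = exp(-tG).\<close>
definition C0_semigroup_gen ::
  "(complex \<Rightarrow> 'x::ab_group_add \<Rightarrow> 'x) \<Rightarrow> ('x \<Rightarrow> 'x \<Rightarrow> complex) \<Rightarrow> 'x set \<Rightarrow> ('x \<Rightarrow> 'x)
     \<Rightarrow> ('x \<times> 'x) set \<Rightarrow> ('x \<times> 'x \<Rightarrow> 'x \<times> 'x) \<Rightarrow> (real \<Rightarrow> 'x \<times> 'x \<Rightarrow> 'x \<times> 'x) \<Rightarrow> bool" where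
  "C0_semigroup_gen sm ip DS S DG G T \<longleftrightarrow>
     (\<forall>t\<ge>0. \<forall>\<xi>\<in>Yset DS. T t \<xi> \<in> Yset DS) \<and>
     (\<forall>t\<ge>0. \<forall>\<xi>\<in>Yset DS. \<forall>\<eta>\<in>Yset DS. T t (\<xi> + \<eta>) = T t \<xi> + T t \<eta>) \<and>
     (\<forall>t\<ge>0. \<forall>c. \<forall>\<xi>\<in>Yset DS. T t (Ysm sm c \<xi>) = Ysm sm c (T t \<xi>)) \<and>
     (\<forall>t\<ge>0. \<exists>M. \<forall>\<xi>\<in>Yset DS. Ynorm ip S (T t \<xi>) \<le> M * Ynorm ip S \<xi>) \<and>
     (\<forall>\<xi>\<in>Yset DS. T 0 \<xi> = \<xi>) \<and>
     (\<forall>s\<ge>0. \<forall>t\<ge>0. \<forall>\<xi>\<in>Yset DS. T (s + t) \<xi> = T s (T t \<xi>)) \<and>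
     (\<forall>\<xi>\<in>Yset DS. \<forall>t\<ge>0. \<forall>e>0. \<exists>\<delta>>0. \<forall>s\<ge>0. \<bar>s - t\<bar> < \<delta> \<longrightarrow>
         Ynorm ip S (T s \<xi> - T t \<xi>) < e) \<and>
     (\<forall>\<xi>\<in>Yset DS.
        (\<xi> \<in> DG \<longleftrightarrow> (\<exists>L\<in>Yset DS. \<forall>e>0. \<exists>\<delta>>0. \<forall>h. 0 < h \<and> h < \<delta> \<longrightarrow>
            Ynorm ip S (Ysm sm (complex_of_real (1 / h)) (T h \<xi> - \<xi>) - L) < e)) \<and>
        (\<xi> \<in> DG \<longrightarrow> (\<forall>e>0. \<exists>\<delta>>0. \<forall>h. 0 < h \<and> h < \<delta> \<longrightarrow>
            Ynorm ip S (Ysm sm (complex_of_real (1 / h)) (T h \<xi> - \<xi>) - (- G \<xi>)) < e)))"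

end

theory Submission
  imports Defs
begin

(* Along an orbit (u, v) = T(t) xi the energy
     E = |A^(1/2) u|^2 - eps |u|^2 + |v|^2 = |A0^(1/2) u|^2 + |v|^2
   is conserved by the wave part of the generator and changes only through B, at the rate
   2 Re (+-i <v|B v>) <= 2 mu_B |v|^2 <= 2 mu_B E; hence E(t) <= exp (2 mu_B t) E(0).
   This bounds |v| = |u'| by exp (mu_B t) E(0)^(1/2), so |u| grows at most linearly in t, and the
   term eps |u|^2 of the norm of Y produces the factor e eps^(1/2) t once t >= eps^(-1/2).
   The estimate is first proved on the generator domain, where orbits are differentiable, and
   extended to Y by density, which rests on the projection theorem in Hilbert space. *)

section \<open>Hilbert spaces given by explicit operations\<close>

lemma one_over_Suc_less:
  fixes r :: real
  assumes "r > 0"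
  shows "\<exists>N. \<forall>n\<ge>N. 1 / (real n + 1) < r"
proof -
  obtain N where N: "inverse (real (Suc N)) < r"
    using reals_Archimedean[OF assms] by blast
  have "1 / (real n + 1) < r" if "n \<ge> N" for n
  proof -
    have "1 / (real n + 1) \<le> 1 / (real N + 1)"
      using that by (simp add: frac_le)
    then show ?thesis
      using N by (simp add: inverse_eq_divide add.commute)
  qed
  then show ?thesis
    by blast
qed

locale complex_module =
  fixes sm :: "complex \<Rightarrow> 'x::ab_group_add \<Rightarrow> 'x"
  assumes sm_add_right: "sm a (x + y) = sm a x + sm a y"
    and sm_add_left: "sm (a + b) x = sm a x + sm b x"
    and sm_assoc: "sm a (sm b x) = sm (a * b) x"
    and sm_one: "sm 1 x = x"
begin

lemma sm_zero_left [simp]: "sm 0 x = 0"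
  using sm_add_left[of 0 0 x] by simp

lemma sm_zero_right [simp]: "sm a 0 = 0"
  using sm_add_right[of a 0 0] by simp

lemma sm_minus_right: "sm a (- x) = - sm a x"
proof -
  have "sm a (- x) + sm a x = 0"
    by (simp flip: sm_add_right)
  then show ?thesis
    by (simp add: eq_neg_iff_add_eq_0)
qed

lemma sm_minus_left: "sm (- a) x = - sm a x"
proof -
  have "sm (- a) x + sm a x = 0"
    by (simp flip: sm_add_left)
  then show ?thesis
    by (simp add: eq_neg_iff_add_eq_0)
qed

lemma sm_diff_right: "sm a (x - y) = sm a x - sm a y"
  using sm_add_right[of a x "- y"] by (simp add: sm_minus_right)

lemma sm_minus_one: "sm (- 1) x = - x"
  by (simp add: sm_minus_left sm_one)

lemma lin_subspace_zero: "lin_subspace sm D \<Longrightarrow> 0 \<in> D"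
  and lin_subspace_add: "lin_subspace sm D \<Longrightarrow> x \<in> D \<Longrightarrow> y \<in> D \<Longrightarrow> x + y \<in> D"
  and lin_subspace_sm: "lin_subspace sm D \<Longrightarrow> x \<in> D \<Longrightarrow> sm a x \<in> D"
  by (simp_all add: lin_subspace_def)

lemma lin_subspace_minus: "lin_subspace sm D \<Longrightarrow> x \<in> D \<Longrightarrow> - x \<in> D"
  by (metis sm_minus_one lin_subspace_sm)

lemma lin_subspace_diff: "lin_subspace sm D \<Longrightarrow> x \<in> D \<Longrightarrow> y \<in> D \<Longrightarrow> x - y \<in> D"
  unfolding diff_conv_add_uminus by (intro lin_subspace_add lin_subspace_minus)

lemma linear_op_subspace: "linear_op sm D f \<Longrightarrow> lin_subspace sm D"
  and linear_op_add: "linear_op sm D f \<Longrightarrow> x \<in> D \<Longrightarrow> y \<in> D \<Longrightarrow> f (x + y) = f x + f y"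
  and linear_op_sm: "linear_op sm D f \<Longrightarrow> x \<in> D \<Longrightarrow> f (sm a x) = sm a (f x)"
  by (simp_all add: linear_op_def)

lemma linear_op_zero: "linear_op sm D f \<Longrightarrow> f 0 = 0"
  using linear_op_sm[of D f 0 0] by (simp add: linear_op_def lin_subspace_def)

lemma linear_op_diff:
  assumes f: "linear_op sm D f" and x: "x \<in> D" and y: "y \<in> D"
  shows "f (x - y) = f x - f y"
proof -
  have "sm (- 1) y \<in> D"
    using f y linear_op_subspace lin_subspace_sm by blast
  then show ?thesis
    using linear_op_add[OF f x, of "- y"] linear_op_sm[OF f y, of "- 1"] by (simp add: sm_minus_one)
qed

lemma lin_subspace_image:
  assumes f: "linear_op sm D f"
  shows "lin_subspace sm (f ` D)"
  unfolding lin_subspace_def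
proof (intro conjI ballI allI)
  have D: "lin_subspace sm D"
    using f by (rule linear_op_subspace)
  show "0 \<in> f ` D"
    using linear_op_zero[OF f] lin_subspace_zero[OF D] by (metis image_eqI)
  show "u + v \<in> f ` D" if uv: "u \<in> f ` D" "v \<in> f ` D" for u v
  proof -
    obtain x y where "x \<in> D" "y \<in> D" "u = f x" "v = f y"
      using uv by blast
    then show ?thesis
      using linear_op_add[OF f] lin_subspace_add[OF D] by (metis image_eqI)
  qed
  show "sm a u \<in> f ` D" if u: "u \<in> f ` D" for a u
  proof -
    obtain x where "x \<in> D" "u = f x"
      using u by blast
    then show ?thesis
      using linear_op_sm[OF f] lin_subspace_sm[OF D] by (metis image_eqI)
  qed
qed

lemma linear_op_plus_id: "linear_op sm D f \<Longrightarrow> linear_op sm D (\<lambda>x. f x + x)"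
  by (simp add: linear_op_def sm_add_right)

end

text \<open>A Hilbert space carried by a subspace \<open>D\<close> of the ambient group: the inner product \<open>q\<close>
  is only required to behave on \<open>D\<close>, so the graph inner product of \<open>A\<^sup>1\<^sup>/\<^sup>2\<close> on its domain
  is an instance as well as the ambient space itself.\<close>

locale hilbert_on = complex_module sm for sm :: "complex \<Rightarrow> 'x::ab_group_add \<Rightarrow> 'x" +
  fixes D :: "'x set" and q :: "'x \<Rightarrow> 'x \<Rightarrow> complex"
  assumes D_subspace: "lin_subspace sm D"
    and inner_add_right: "x \<in> D \<Longrightarrow> y \<in> D \<Longrightarrow> z \<in> D \<Longrightarrow> q x (y + z) = q x y + q x z"
    and inner_sm_right: "x \<in> D \<Longrightarrow> y \<in> D \<Longrightarrow> q x (sm a y) = a * q x y"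
    and inner_cnj_commute: "x \<in> D \<Longrightarrow> y \<in> D \<Longrightarrow> q y x = cnj (q x y)"
    and inner_self_nonneg: "x \<in> D \<Longrightarrow> 0 \<le> Re (q x x)"
    and inner_self_eq_zero: "x \<in> D \<Longrightarrow> q x x = 0 \<Longrightarrow> x = 0"
    and complete: "(\<forall>n::nat. s n \<in> D) \<Longrightarrow> (\<forall>e>0. \<exists>N. \<forall>m\<ge>N. \<forall>n\<ge>N. hnorm q (s m - s n) < e)
      \<Longrightarrow> \<exists>l\<in>D. \<forall>e>0. \<exists>N. \<forall>n\<ge>N. hnorm q (s n - l) < e"
begin

lemma D_zero [simp]: "0 \<in> D"
  and D_add [simp]: "x \<in> D \<Longrightarrow> y \<in> D \<Longrightarrow> x + y \<in> D"
  and D_sm [simp]: "x \<in> D \<Longrightarrow> sm a x \<in> D"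
  and D_minus [simp]: "x \<in> D \<Longrightarrow> - x \<in> D"
  and D_diff [simp]: "x \<in> D \<Longrightarrow> y \<in> D \<Longrightarrow> x - y \<in> D"
  using D_subspace lin_subspace_zero lin_subspace_add lin_subspace_sm lin_subspace_minus
    lin_subspace_diff by blast+

lemma inner_zero_right [simp]: "x \<in> D \<Longrightarrow> q x 0 = 0"
  using inner_sm_right[of x 0 0] by simp

lemma inner_zero_left [simp]: "x \<in> D \<Longrightarrow> q 0 x = 0"
  using inner_cnj_commute[of x 0] by simp

lemma inner_add_left: "x \<in> D \<Longrightarrow> y \<in> D \<Longrightarrow> z \<in> D \<Longrightarrow> q (x + y) z = q x z + q y z"
  by (metis D_add complex_cnj_add inner_add_right inner_cnj_commute)

lemma inner_sm_left: "x \<in> D \<Longrightarrow> y \<in> D \<Longrightarrow> q (sm a x) y = cnj a * q x y"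
  by (metis D_sm complex_cnj_mult inner_cnj_commute inner_sm_right)

lemma inner_minus_right: "x \<in> D \<Longrightarrow> y \<in> D \<Longrightarrow> q x (- y) = - q x y"
  by (metis inner_sm_right sm_minus_one mult_minus1)

lemma inner_minus_left: "x \<in> D \<Longrightarrow> y \<in> D \<Longrightarrow> q (- x) y = - q x y"
  using inner_sm_left[of x y "- 1"] by (simp add: sm_minus_one)

lemma inner_diff_right: "x \<in> D \<Longrightarrow> y \<in> D \<Longrightarrow> z \<in> D \<Longrightarrow> q x (y - z) = q x y - q x z"
  using inner_add_right[of x y "- z"] by (simp add: inner_minus_right)

lemma inner_diff_left: "x \<in> D \<Longrightarrow> y \<in> D \<Longrightarrow> z \<in> D \<Longrightarrow> q (x - y) z = q x z - q y z"
  using inner_add_left[of x "- y" z] by (simp add: inner_minus_left)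

lemma inner_self_real: "x \<in> D \<Longrightarrow> q x x = complex_of_real (Re (q x x))"
  using inner_cnj_commute[of x x] by (simp add: complex_eq_iff)

lemma hnorm_sq: "x \<in> D \<Longrightarrow> (hnorm q x)\<^sup>2 = Re (q x x)"
  by (simp add: hnorm_def inner_self_nonneg)

lemma hnorm_nonneg: "x \<in> D \<Longrightarrow> 0 \<le> hnorm q x"
  by (simp add: hnorm_def inner_self_nonneg)

lemma hnorm_zero [simp]: "hnorm q 0 = 0"
  by (simp add: hnorm_def)

lemma hnorm_eq_zero_iff: "x \<in> D \<Longrightarrow> hnorm q x = 0 \<longleftrightarrow> x = 0"
  by (metis hnorm_def hnorm_zero inner_self_eq_zero inner_self_real of_real_0 real_sqrt_eq_zero_cancel_iff)

lemma inner_self_add_sm: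
  assumes x: "x \<in> D" and y: "y \<in> D"
  shows "Re (q (x + sm a y) (x + sm a y)) = Re (q x x) + 2 * Re (a * q x y) + (cmod a)\<^sup>2 * Re (q y y)"
proof -
  have "q (x + sm a y) (x + sm a y) = q x x + a * q x y + cnj (a * q x y) + cnj a * a * q y y"
    using x y by (simp add: inner_add_left inner_add_right inner_sm_left inner_sm_right
        inner_cnj_commute[of x y] algebra_simps)
  moreover have "cnj a * a = complex_of_real ((cmod a)\<^sup>2)"
    by (metis complex_norm_square mult.commute of_real_power)
  then have "cnj a * a * q y y = complex_of_real ((cmod a)\<^sup>2 * Re (q y y))"
    by (subst inner_self_real[OF y]) simp
  ultimately show ?thesis by simp
qed

lemma inner_self_add:
  "x \<in> D \<Longrightarrow> y \<in> D \<Longrightarrow> Re (q (x + y) (x + y)) = Re (q x x) + 2 * Re (q x y) + Re (q y y)"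
  using inner_self_add_sm[of x y 1] by (simp add: sm_one)

lemma inner_self_diff:
  "x \<in> D \<Longrightarrow> y \<in> D \<Longrightarrow> Re (q (x - y) (x - y)) = Re (q x x) - 2 * Re (q x y) + Re (q y y)"
  using inner_self_add_sm[of x y "- 1"] by (simp add: sm_minus_one)

lemma Cauchy_Schwarz_sq:
  assumes x: "x \<in> D" and y: "y \<in> D"
  shows "(cmod (q x y))\<^sup>2 \<le> Re (q x x) * Re (q y y)"
proof (cases "x = 0")
  case True
  then show ?thesis using y by simp
next
  case False
  define W where "W = (cmod (q x y))\<^sup>2"
  define Qx where "Qx = Re (q x x)"
  have Qx: "Qx > 0"
    using False hnorm_eq_zero_iff[OF x] inner_self_nonneg[OF x] by (auto simp: Qx_def hnorm_def)
  \<comment> \<open>expand \<open>0 \<le> \<parallel>y - (\<langle>x|y\<rangle>/\<langle>x|x\<rangle>) x\<parallel>\<^sup>2\<close>\<close>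
  define a where "a = - complex_of_real (1 / Qx) * q x y"
  have "a * q y x = - complex_of_real (W / Qx)"
    using inner_cnj_commute[OF x y] complex_norm_square[of "q x y"]
    by (simp add: a_def W_def)
  moreover have "(cmod a)\<^sup>2 = W / Qx\<^sup>2"
    using Qx by (simp add: a_def W_def norm_divide power_divide)
  moreover have "0 \<le> Re (q (y + sm a x) (y + sm a x))"
    using x y inner_self_nonneg by simp
  ultimately have "0 \<le> Re (q y y) - 2 * (W / Qx) + W / Qx\<^sup>2 * Qx"
    using inner_self_add_sm[OF y x, of a] by (simp add: Qx_def)
  then have "W / Qx \<le> Re (q y y)"
    using Qx by (simp add: power2_eq_square)
  then show ?thesis
    using Qx by (simp add: W_def Qx_def divide_le_eq mult.commute)
qed

lemma Cauchy_Schwarz: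
  assumes x: "x \<in> D" and y: "y \<in> D"
  shows "cmod (q x y) \<le> hnorm q x * hnorm q y"
proof (rule power2_le_imp_le)
  show "(cmod (q x y))\<^sup>2 \<le> (hnorm q x * hnorm q y)\<^sup>2"
    using Cauchy_Schwarz_sq[OF x y] by (simp add: power_mult_distrib hnorm_sq x y)
qed (simp add: x y hnorm_nonneg)

lemma abs_Re_inner_le: "x \<in> D \<Longrightarrow> y \<in> D \<Longrightarrow> \<bar>Re (q x y)\<bar> \<le> hnorm q x * hnorm q y"
  using Cauchy_Schwarz abs_Re_le_cmod order_trans by blast

lemma hnorm_triangle:
  assumes x: "x \<in> D" and y: "y \<in> D"
  shows "hnorm q (x + y) \<le> hnorm q x + hnorm q y"
proof -
  have "(hnorm q (x + y))\<^sup>2 = (hnorm q x)\<^sup>2 + 2 * Re (q x y) + (hnorm q y)\<^sup>2"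
    using inner_self_add[OF x y] hnorm_sq x y by simp
  also have "\<dots> \<le> (hnorm q x + hnorm q y)\<^sup>2"
    using abs_Re_inner_le[OF x y] by (simp add: power2_sum)
  finally show ?thesis
    by (rule power2_le_imp_le) (simp add: x y hnorm_nonneg)
qed

lemma hnorm_sm: "x \<in> D \<Longrightarrow> hnorm q (sm a x) = cmod a * hnorm q x"
  using inner_self_add_sm[of 0 x a] by (simp add: hnorm_def real_sqrt_mult)

lemma hnorm_minus_commute: "x \<in> D \<Longrightarrow> y \<in> D \<Longrightarrow> hnorm q (x - y) = hnorm q (y - x)"
  using hnorm_sm[of "y - x" "- 1"] by (simp add: sm_minus_one)

lemma hnorm_triangle_diff:
  "x \<in> D \<Longrightarrow> y \<in> D \<Longrightarrow> z \<in> D \<Longrightarrow> hnorm q (x - z) \<le> hnorm q (x - y) + hnorm q (y - z)"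
  using hnorm_triangle[of "x - y" "y - z"] by simp

lemma hnorm_diff_ge: "x \<in> D \<Longrightarrow> y \<in> D \<Longrightarrow> \<bar>hnorm q x - hnorm q y\<bar> \<le> hnorm q (x - y)"
  using hnorm_triangle[of "x - y" y] hnorm_triangle[of "y - x" x] hnorm_minus_commute[of x y]
  by simp

lemma parallelogram:
  "x \<in> D \<Longrightarrow> y \<in> D \<Longrightarrow>
    (hnorm q (x + y))\<^sup>2 + (hnorm q (x - y))\<^sup>2 = 2 * (hnorm q x)\<^sup>2 + 2 * (hnorm q y)\<^sup>2"
  using inner_self_add inner_self_diff hnorm_sq by simp

definition subspace_dist :: "'x set \<Rightarrow> 'x \<Rightarrow> real" where
  "subspace_dist M x = Inf ((\<lambda>m. hnorm q (x - m)) ` M)"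

context
  fixes M :: "'x set" and x :: 'x
  assumes M: "lin_subspace sm M" "M \<subseteq> D" and x: "x \<in> D"
begin

private lemma M_D: "m \<in> M \<Longrightarrow> m \<in> D"
  using M by blast

private lemma bdd_below_dists: "bdd_below ((\<lambda>m. hnorm q (x - m)) ` M)"
  by (rule bdd_belowI[of _ 0]) (auto simp: x M_D hnorm_nonneg)

lemma subspace_dist_le: "m \<in> M \<Longrightarrow> subspace_dist M x \<le> hnorm q (x - m)"
  unfolding subspace_dist_def by (rule cInf_lower) (auto simp: bdd_below_dists)

lemma subspace_dist_nonneg: "0 \<le> subspace_dist M x"
  unfolding subspace_dist_def using M lin_subspace_zero
  by (intro cInf_greatest) (auto simp: x M_D hnorm_nonneg)

lemma subspace_dist_approx:
  assumes r: "r > 0"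
  obtains m where "m \<in> M" "(hnorm q (x - m))\<^sup>2 < (subspace_dist M x)\<^sup>2 + r"
proof -
  let ?d = "subspace_dist M x"
  have "?d < sqrt (?d\<^sup>2 + r)"
    using r subspace_dist_nonneg by (simp add: real_less_rsqrt)
  then obtain m where m: "m \<in> M" "hnorm q (x - m) < sqrt (?d\<^sup>2 + r)"
    using cInf_lessD[of "(\<lambda>m. hnorm q (x - m)) ` M"] M lin_subspace_zero
    unfolding subspace_dist_def by blast
  then have "(hnorm q (x - m))\<^sup>2 < (sqrt (?d\<^sup>2 + r))\<^sup>2"
    by (intro power_strict_mono) (simp_all add: x M_D hnorm_nonneg)
  with r m(1) that show ?thesis
    by simp
qed

text \<open>Applied to the midpoint of \<open>m\<close> and \<open>m'\<close>, the parallelogram law makes every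
  minimising sequence Cauchy.\<close>

lemma hnorm_diff_sq_le_subspace_dist:
  assumes m: "m \<in> M" and m': "m' \<in> M"
  shows "(hnorm q (m - m'))\<^sup>2
    \<le> 2 * (hnorm q (x - m))\<^sup>2 + 2 * (hnorm q (x - m'))\<^sup>2 - 4 * (subspace_dist M x)\<^sup>2"
proof -
  define mid where "mid = sm (1 / 2) (m + m')"
  have mid: "mid \<in> M"
    unfolding mid_def using M m m' lin_subspace_add lin_subspace_sm by blast
  have "sm 2 mid = m + m'" "sm 2 x = x + x"
    using sm_add_left[of 1 1 x] by (simp_all add: mid_def sm_assoc sm_one)
  then have "(x - m) + (x - m') = sm 2 (x - mid)"
    by (simp add: sm_diff_right algebra_simps)
  then have "hnorm q ((x - m) + (x - m')) = 2 * hnorm q (x - mid)"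
    using hnorm_sm[of "x - mid" 2] x M_D[OF mid] by simp
  moreover have "subspace_dist M x \<le> hnorm q (x - mid)"
    using subspace_dist_le[OF mid] .
  then have "(subspace_dist M x)\<^sup>2 \<le> (hnorm q (x - mid))\<^sup>2"
    using subspace_dist_nonneg by (simp add: power_mono)
  moreover have "(hnorm q ((x - m) + (x - m')))\<^sup>2 + (hnorm q (m' - m))\<^sup>2
      = 2 * (hnorm q (x - m))\<^sup>2 + 2 * (hnorm q (x - m'))\<^sup>2"
    using parallelogram[of "x - m" "x - m'"] x M_D[OF m] M_D[OF m'] by simp
  ultimately show ?thesis
    using hnorm_minus_commute[OF M_D[OF m] M_D[OF m']] by (simp add: power_mult_distrib)
qed

lemma minimizing_sequence:
  obtains ms where "\<And>n. ms n \<in> M"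
    "\<And>n::nat. (hnorm q (x - ms n))\<^sup>2 < (subspace_dist M x)\<^sup>2 + 1 / (real n + 1)"
proof -
  have "\<forall>n::nat. \<exists>m. m \<in> M \<and> (hnorm q (x - m))\<^sup>2 < (subspace_dist M x)\<^sup>2 + 1 / (real n + 1)"
  proof
    fix n :: nat
    obtain m where "m \<in> M" "(hnorm q (x - m))\<^sup>2 < (subspace_dist M x)\<^sup>2 + 1 / (real n + 1)"
      by (rule subspace_dist_approx[of "1 / (real n + 1)"]) simp_all
    then show "\<exists>m. m \<in> M \<and> (hnorm q (x - m))\<^sup>2 < (subspace_dist M x)\<^sup>2 + 1 / (real n + 1)"
      by blast
  qed
  then obtain ms where "\<forall>n. ms n \<in> M \<and>
      (hnorm q (x - ms n))\<^sup>2 < (subspace_dist M x)\<^sup>2 + 1 / (real n + 1)"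
    using choice[where Q = "\<lambda>n m. m \<in> M \<and>
      (hnorm q (x - m))\<^sup>2 < (subspace_dist M x)\<^sup>2 + 1 / (real n + 1)"] by blast
  with that show ?thesis
    by blast
qed

context
  fixes ms :: "nat \<Rightarrow> 'x"
  assumes ms: "\<And>n. ms n \<in> M"
    and ms_close: "\<And>n. (hnorm q (x - ms n))\<^sup>2 < (subspace_dist M x)\<^sup>2 + 1 / (real n + 1)"
begin

lemma minimizing_sequence_Cauchy: "\<forall>e>0. \<exists>N. \<forall>j\<ge>N. \<forall>k\<ge>N. hnorm q (ms j - ms k) < e"
proof (intro allI impI)
  fix e :: real
  assume e: "e > 0"
  obtain N where N: "\<forall>n\<ge>N. 1 / (real n + 1) < e\<^sup>2 / 4"
    using one_over_Suc_less[of "e\<^sup>2 / 4"] e by auto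
  have "hnorm q (ms j - ms k) < e" if "j \<ge> N" "k \<ge> N" for j k
  proof (rule power_less_imp_less_base)
    have "(hnorm q (ms j - ms k))\<^sup>2
        \<le> 2 * (hnorm q (x - ms j))\<^sup>2 + 2 * (hnorm q (x - ms k))\<^sup>2 - 4 * (subspace_dist M x)\<^sup>2"
      by (rule hnorm_diff_sq_le_subspace_dist[OF ms ms])
    moreover have "1 / (real j + 1) < e\<^sup>2 / 4" "1 / (real k + 1) < e\<^sup>2 / 4"
      using N that by auto
    ultimately show "(hnorm q (ms j - ms k))\<^sup>2 < e\<^sup>2"
      using ms_close[of j] ms_close[of k] by linarith
  qed (use e in simp)
  then show "\<exists>N. \<forall>j\<ge>N. \<forall>k\<ge>N. hnorm q (ms j - ms k) < e"
    by blast
qed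

lemma hnorm_le_subspace_dist_at_limit:
  assumes p: "p \<in> D" and lim: "\<And>e. e > 0 \<Longrightarrow> \<exists>N. \<forall>n\<ge>N. hnorm q (ms n - p) < e"
  shows "hnorm q (x - p) \<le> subspace_dist M x"
proof (rule field_le_epsilon)
  let ?d = "subspace_dist M x"
  fix e :: real
  assume e: "e > 0"
  obtain N1 where N1: "\<forall>n\<ge>N1. hnorm q (ms n - p) < e / 2"
    using lim[of "e / 2"] e by auto
  obtain N2 where N2: "\<forall>n\<ge>N2. 1 / (real n + 1) < (e / 2)\<^sup>2"
    using one_over_Suc_less[of "(e / 2)\<^sup>2"] e by auto
  define n where "n = max N1 N2"
  have "(?d + e / 2)\<^sup>2 = ?d\<^sup>2 + (e / 2)\<^sup>2 + ?d * e"
    by (simp add: power2_sum)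
  moreover have "1 / (real n + 1) < (e / 2)\<^sup>2"
    using N2 by (simp add: n_def)
  moreover have "0 \<le> ?d * e"
    using subspace_dist_nonneg e by simp
  ultimately have "(hnorm q (x - ms n))\<^sup>2 < (?d + e / 2)\<^sup>2"
    using ms_close[of n] by linarith
  then have "hnorm q (x - ms n) < ?d + e / 2"
    by (rule power_less_imp_less_base) (use subspace_dist_nonneg e in simp)
  moreover have "hnorm q (ms n - p) < e / 2"
    using N1 by (simp add: n_def)
  moreover have "hnorm q (x - p) \<le> hnorm q (x - ms n) + hnorm q (ms n - p)"
    by (rule hnorm_triangle_diff) (simp_all add: x p M_D ms)
  ultimately show "hnorm q (x - p) \<le> ?d + e"
    by linarith
qed

end

lemma best_approximation:
  obtains p where "p \<in> D" "\<And>e. e > 0 \<Longrightarrow> \<exists>m\<in>M. hnorm q (m - p) < e"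
    "\<And>m. m \<in> M \<Longrightarrow> hnorm q (x - p) \<le> hnorm q (x - p + m)"
proof -
  let ?d = "subspace_dist M x"
  obtain ms where ms: "\<And>n. ms n \<in> M"
    and ms_close: "\<And>n. (hnorm q (x - ms n))\<^sup>2 < ?d\<^sup>2 + 1 / (real n + 1)"
    using minimizing_sequence by blast
  have "\<exists>p\<in>D. \<forall>e>0. \<exists>N. \<forall>n\<ge>N. hnorm q (ms n - p) < e"
    using complete[of ms] M_D[OF ms] minimizing_sequence_Cauchy[OF ms ms_close] by blast
  then obtain p where p: "p \<in> D" and lim: "\<And>e. e > 0 \<Longrightarrow> \<exists>N. \<forall>n\<ge>N. hnorm q (ms n - p) < e"
    by blast
  have le: "hnorm q (x - p) \<le> ?d"
    by (rule hnorm_le_subspace_dist_at_limit[OF ms ms_close p lim])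
  have ge: "?d \<le> hnorm q (x - p + m)" if m: "m \<in> M" for m
  proof (rule field_le_epsilon)
    fix e :: real
    assume "e > 0"
    then obtain N where "\<forall>n\<ge>N. hnorm q (ms n - p) < e"
      using lim by blast
    then have N: "hnorm q (ms N - p) < e"
      by simp
    have "ms N - m \<in> M"
      using M(1) ms m lin_subspace_diff by blast
    then have "?d \<le> hnorm q (x - (ms N - m))"
      by (rule subspace_dist_le)
    also have "hnorm q (x - (ms N - m)) = hnorm q ((x - p + m) + (p - ms N))"
      by (rule arg_cong[where f = "hnorm q"]) (simp add: algebra_simps)
    also have "\<dots> \<le> hnorm q (x - p + m) + hnorm q (p - ms N)"
      by (rule hnorm_triangle) (simp_all add: x p M_D ms m)
    also have "hnorm q (p - ms N) = hnorm q (ms N - p)"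
      by (rule hnorm_minus_commute[OF p M_D[OF ms]])
    finally show "?d \<le> hnorm q (x - p + m) + e"
      using N by simp
  qed
  show ?thesis
  proof (rule that[OF p])
    show "\<exists>m\<in>M. hnorm q (m - p) < e" if e: "e > 0" for e
    proof -
      obtain N where "\<forall>n\<ge>N. hnorm q (ms n - p) < e"
        using lim[OF e] by blast
      then have "hnorm q (ms N - p) < e"
        by simp
      then show ?thesis
        using ms[of N] by blast
    qed
    show "hnorm q (x - p) \<le> hnorm q (x - p + m)" if "m \<in> M" for m
      using le ge[OF that] by linarith
  qed
qed

end

text \<open>Minimising \<open>\<parallel>z + a m\<parallel>\<^sup>2\<close> over \<open>a\<close> at \<open>a = - t \<langle>z|m\<rangle>\<^sup>*\<close> with \<open>t\<close> small.\<close>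

lemma inner_eq_zero_if_hnorm_minimal:
  assumes z: "z \<in> D" and m: "m \<in> D" and min: "\<And>a. hnorm q z \<le> hnorm q (z + sm a m)"
  shows "q z m = 0"
proof -
  define W where "W = (cmod (q z m))\<^sup>2"
  define Qm where "Qm = Re (q m m)"
  define t where "t = 1 / (Qm + 1)"
  have Qm: "0 \<le> Qm"
    using inner_self_nonneg m by (simp add: Qm_def)
  have t: "0 < t" "t * Qm \<le> 1"
    using Qm by (simp_all add: t_def divide_le_eq)
  define a where "a = - (complex_of_real t * cnj (q z m))"
  have "(hnorm q z)\<^sup>2 \<le> (hnorm q (z + sm a m))\<^sup>2"
    using min[of a] by (rule power_mono) (simp add: z hnorm_nonneg)
  also have "(hnorm q (z + sm a m))\<^sup>2 = Re (q z z) + 2 * Re (a * q z m) + (cmod a)\<^sup>2 * Qm"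
    using inner_self_add_sm[OF z m, of a] hnorm_sq z m by (simp add: Qm_def)
  also have "a * q z m = - complex_of_real (t * W)"
    using complex_norm_square[of "q z m"] by (simp add: a_def W_def mult.commute)
  also have "(cmod a)\<^sup>2 = t\<^sup>2 * W"
    using t by (simp add: a_def W_def norm_mult power_mult_distrib)
  finally have "t * (2 * W) \<le> t * ((t * Qm) * W)"
    using hnorm_sq[OF z] by (simp add: power2_eq_square algebra_simps)
  then have "2 * W \<le> (t * Qm) * W"
    using t(1) by simp
  also have "\<dots> \<le> W"
    using t Qm by (intro mult_left_le_one_le) (simp_all add: W_def)
  finally show ?thesis
    by (simp add: W_def)
qed

lemma dense_if_orthogonal_complement_trivial:
  assumes M: "lin_subspace sm M" "M \<subseteq> D"
    and orth: "\<And>w. w \<in> D \<Longrightarrow> (\<forall>m\<in>M. q w m = 0) \<Longrightarrow> w = 0"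
    and x: "x \<in> D" and e: "e > 0"
  shows "\<exists>m\<in>M. hnorm q (x - m) < e"
proof -
  obtain p where p: "p \<in> D" "\<And>e. e > 0 \<Longrightarrow> \<exists>m\<in>M. hnorm q (m - p) < e"
    and min: "\<And>m. m \<in> M \<Longrightarrow> hnorm q (x - p) \<le> hnorm q (x - p + m)"
    using best_approximation[OF M x] by blast
  have "q (x - p) m = 0" if m: "m \<in> M" for m
  proof (rule inner_eq_zero_if_hnorm_minimal)
    show "x - p \<in> D" "m \<in> D"
      using x p m M by auto
    show "hnorm q (x - p) \<le> hnorm q (x - p + sm a m)" for a
      using min lin_subspace_sm[OF M(1) m] by blast
  qed
  then have "x = p"
    using orth[of "x - p"] x p by simp
  obtain m where m: "m \<in> M" "hnorm q (m - p) < e"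
    using p(2)[OF e] by blast
  have "hnorm q (x - m) = hnorm q (m - p)"
    using hnorm_minus_commute[OF x, of m] m(1) M \<open>x = p\<close> by auto
  with m have "hnorm q (x - m) < e"
    by simp
  with m(1) show ?thesis
    by blast
qed

end

section \<open>The square root of \<open>A\<close> and its graph norm\<close>

lemma hilbert_on_UNIV_if_complex_hilbert:
  assumes "complex_hilbert sm ip"
  shows "hilbert_on sm UNIV ip"
proof -
  note h = assms[unfolded complex_hilbert_def]
  show ?thesis
  proof (unfold_locales)
    fix a b x y z and s :: "nat \<Rightarrow> _"
    show "sm a (x + y) = sm a x + sm a y" using h by (elim conjE) blast
    show "sm (a + b) x = sm a x + sm b x" using h by (elim conjE) blast
    show "sm a (sm b x) = sm (a * b) x" using h by (elim conjE) blast
    show "sm 1 x = x" using h by (elim conjE) blast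
    show "ip x (y + z) = ip x y + ip x z" using h by (elim conjE) blast
    show "ip x (sm a y) = a * ip x y" using h by (elim conjE) blast
    show "ip y x = cnj (ip x y)" using h by (elim conjE) blast
    show "0 \<le> Re (ip x x)" using h by (elim conjE) blast
    show "ip x x = 0 \<Longrightarrow> x = 0" using h by (elim conjE) blast
    have "\<forall>s :: nat \<Rightarrow> _. (\<forall>e>0. \<exists>N. \<forall>m\<ge>N. \<forall>n\<ge>N. hnorm ip (s m - s n) < e) \<longrightarrow>
        (\<exists>l. \<forall>e>0. \<exists>N. \<forall>n\<ge>N. hnorm ip (s n - l) < e)"
      using h by (elim conjE) assumption
    then show "\<forall>n. s n \<in> UNIV \<Longrightarrow> \<forall>e>0. \<exists>N. \<forall>m\<ge>N. \<forall>n\<ge>N. hnorm ip (s m - s n) < e \<Longrightarrow>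
        \<exists>l\<in>UNIV. \<forall>e>0. \<exists>N. \<forall>n\<ge>N. hnorm ip (s n - l) < e"
      by blast
  qed (simp add: lin_subspace_def)
qed

locale coercive_root =
  fixes sm :: "complex \<Rightarrow> 'x::ab_group_add \<Rightarrow> 'x"
    and ip :: "'x \<Rightarrow> 'x \<Rightarrow> complex"
    and DA :: "'x set" and A :: "'x \<Rightarrow> 'x"
    and DS :: "'x set" and S :: "'x \<Rightarrow> 'x"
    and \<epsilon> :: real
  assumes hilb: "complex_hilbert sm ip"
    and eps_pos: "\<epsilon> > 0"
    and A_sa: "self_adjoint sm ip DA A"
    and A_lower: "\<forall>\<xi>\<in>DA. Re (ip \<xi> (A \<xi>)) \<ge> \<epsilon> * Re (ip \<xi> \<xi>)"
    and sqrtA: "is_pos_sqrt sm ip DS S DA A"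
begin

sublocale X: hilbert_on sm UNIV ip
  by (rule hilbert_on_UNIV_if_complex_hilbert[OF hilb])

abbreviation "nrm \<equiv> hnorm ip"

lemma nrm_nonneg [simp]: "0 \<le> nrm x"
  by (simp add: X.hnorm_nonneg)

lemma S_linear: "linear_op sm DS S"
  and S_symmetric: "\<xi> \<in> DS \<Longrightarrow> \<eta> \<in> DS \<Longrightarrow> ip \<eta> (S \<xi>) = ip (S \<eta>) \<xi>"
  and S_adj_dom: "adj_dom ip DS S = DS"
  and DS_dense: "e > 0 \<Longrightarrow> \<exists>y\<in>DS. nrm (x - y) < e"
  and DA_eq: "DA = {\<xi>\<in>DS. S \<xi> \<in> DS}"
  and S_S: "\<xi> \<in> DA \<Longrightarrow> S (S \<xi>) = A \<xi>"
  using sqrtA by (simp_all add: is_pos_sqrt_def self_adjoint_def dense_in_def)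

lemma A_linear: "linear_op sm DA A"
  and A_adj_dom: "adj_dom ip DA A = DA"
  using A_sa by (simp_all add: self_adjoint_def)

lemma DA_DS: "\<xi> \<in> DA \<Longrightarrow> \<xi> \<in> DS"
  and S_DA_DS: "\<xi> \<in> DA \<Longrightarrow> S \<xi> \<in> DS"
  by (simp_all add: DA_eq)

lemma DS_subspace: "lin_subspace sm DS"
  by (rule X.linear_op_subspace[OF S_linear])

lemma DS_zero [simp]: "0 \<in> DS"
  and DS_add [simp]: "x \<in> DS \<Longrightarrow> y \<in> DS \<Longrightarrow> x + y \<in> DS"
  and DS_sm [simp]: "x \<in> DS \<Longrightarrow> sm a x \<in> DS"
  and DS_diff [simp]: "x \<in> DS \<Longrightarrow> y \<in> DS \<Longrightarrow> x - y \<in> DS"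
  by (simp_all add: DS_subspace X.lin_subspace_zero X.lin_subspace_add X.lin_subspace_sm
      X.lin_subspace_diff)

lemma S_add: "x \<in> DS \<Longrightarrow> y \<in> DS \<Longrightarrow> S (x + y) = S x + S y"
  and S_sm: "x \<in> DS \<Longrightarrow> S (sm a x) = sm a (S x)"
  and S_diff: "x \<in> DS \<Longrightarrow> y \<in> DS \<Longrightarrow> S (x - y) = S x - S y"
  by (simp_all add: X.linear_op_add[OF S_linear] X.linear_op_sm[OF S_linear]
      X.linear_op_diff[OF S_linear])

lemma eq_zero_if_orthogonal_to_dense:
  assumes dense: "\<And>x e. e > 0 \<Longrightarrow> \<exists>m\<in>M. nrm (x - m) < e"
    and orth: "\<forall>m\<in>M. ip w m = 0"
  shows "w = 0"
proof (rule ccontr)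
  assume "w \<noteq> 0"
  then have pos: "nrm w > 0"
    using X.hnorm_eq_zero_iff[of w] nrm_nonneg[of w] by (simp add: less_le)
  obtain m where m: "m \<in> M" "nrm (w - m) < nrm w"
    using dense pos by blast
  have "ip w w = ip w (w - m)"
    using orth m(1) by (simp add: X.inner_diff_right)
  then have "Re (ip w w) \<le> nrm w * nrm (w - m)"
    using X.abs_Re_inner_le[of w "w - m"] by simp
  also have "\<dots> < nrm w * nrm w"
    using m(2) pos by simp
  finally show False
    using X.hnorm_sq[of w] by (simp add: power2_eq_square)
qed

text \<open>\<open>S\<close> is closed because it is self-adjoint: a limit pair satisfies \<open>\<langle>x|S \<zeta>\<rangle> = \<langle>y|\<zeta>\<rangle>\<close>
  for all \<open>\<zeta> \<in> D(S)\<close>, so \<open>x \<in> D(S\<^sup>*) = D(S)\<close>.\<close>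

lemma S_closed:
  fixes xs :: "nat \<Rightarrow> 'x"
  assumes xs: "\<And>n. xs n \<in> DS"
    and lim_x: "\<forall>e>0. \<exists>N. \<forall>n\<ge>N. nrm (xs n - x) < e"
    and lim_y: "\<forall>e>0. \<exists>N. \<forall>n\<ge>N. nrm (S (xs n) - y) < e"
  shows "x \<in> DS" "S x = y"
proof -
  have weak: "ip x (S \<zeta>) = ip y \<zeta>" if \<zeta>: "\<zeta> \<in> DS" for \<zeta>
  proof -
    have "cmod (ip x (S \<zeta>) - ip y \<zeta>) \<le> e" if e: "e > 0" for e
    proof -
      define K where "K = nrm (S \<zeta>) + nrm \<zeta> + 1"
      have K: "K > 0"
        unfolding K_def using nrm_nonneg[of "S \<zeta>"] nrm_nonneg[of \<zeta>] by linarith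
      obtain N1 where N1: "\<forall>n\<ge>N1. nrm (xs n - x) < e / K"
        using lim_x[rule_format, OF divide_pos_pos[OF e K]] by blast
      obtain N2 where N2: "\<forall>n\<ge>N2. nrm (S (xs n) - y) < e / K"
        using lim_y[rule_format, OF divide_pos_pos[OF e K]] by blast
      define n where "n = max N1 N2"
      have "N1 \<le> n" "N2 \<le> n"
        by (simp_all add: n_def)
      then have n: "nrm (x - xs n) < e / K" "nrm (S (xs n) - y) < e / K"
        using N1 N2 X.hnorm_minus_commute[of x "xs n"] by simp_all
      have "ip x (S \<zeta>) - ip y \<zeta> = ip (x - xs n) (S \<zeta>) + ip (S (xs n) - y) \<zeta>"
        using S_symmetric[OF \<zeta> xs] by (simp add: X.inner_diff_left)
      then have "cmod (ip x (S \<zeta>) - ip y \<zeta>)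
          \<le> nrm (x - xs n) * nrm (S \<zeta>) + nrm (S (xs n) - y) * nrm \<zeta>"
        using X.Cauchy_Schwarz by (smt (verit) UNIV_I norm_triangle_ineq)
      also have "\<dots> \<le> e / K * nrm (S \<zeta>) + e / K * nrm \<zeta>"
        using n by (intro add_mono mult_right_mono) simp_all
      also have "\<dots> = e / K * (nrm (S \<zeta>) + nrm \<zeta>)"
        by (simp only: distrib_left)
      also have "\<dots> \<le> e / K * K"
        using e K by (intro mult_left_mono) (simp_all add: K_def)
      finally show ?thesis
        using K by simp
    qed
    then show ?thesis
      using field_le_epsilon[of "cmod (ip x (S \<zeta>) - ip y \<zeta>)" 0] by simp
  qed
  then show x: "x \<in> DS"
    using S_adj_dom unfolding adj_dom_def by blast
  have "\<forall>m\<in>DS. ip (S x - y) m = 0"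
    using weak S_symmetric[OF _ x] by (simp add: X.inner_diff_left)
  then have "S x - y = 0"
    using eq_zero_if_orthogonal_to_dense[of DS] DS_dense by blast
  then show "S x = y"
    by simp
qed

definition graph_inner :: "'x \<Rightarrow> 'x \<Rightarrow> complex" where
  "graph_inner x y = ip (S x) (S y) + ip x y"

lemma hnorm_graph_inner: "hnorm graph_inner z = sqrt ((nrm (S z))\<^sup>2 + (nrm z)\<^sup>2)"
  by (simp add: hnorm_def graph_inner_def X.inner_self_nonneg)

lemma nrm_le_hnorm_graph_inner: "nrm z \<le> hnorm graph_inner z"
  and nrm_S_le_hnorm_graph_inner: "nrm (S z) \<le> hnorm graph_inner z"
  and hnorm_graph_inner_le: "hnorm graph_inner z \<le> nrm (S z) + nrm z"
  unfolding hnorm_graph_inner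
  by (simp_all add: real_sqrt_sum_squares_ge1 real_sqrt_sum_squares_ge2 sqrt_sum_squares_le_sum)

lemma graph_inner_complete:
  fixes s :: "nat \<Rightarrow> 'x"
  assumes s: "\<forall>n. s n \<in> DS"
    and Cauchy: "\<forall>e>0. \<exists>N. \<forall>m\<ge>N. \<forall>n\<ge>N. hnorm graph_inner (s m - s n) < e"
  shows "\<exists>l\<in>DS. \<forall>e>0. \<exists>N. \<forall>n\<ge>N. hnorm graph_inner (s n - l) < e"
proof -
  have "\<forall>e>0. \<exists>N. \<forall>m\<ge>N. \<forall>n\<ge>N. nrm (s m - s n) < e"
    using Cauchy nrm_le_hnorm_graph_inner by (meson le_less_trans)
  then have "\<exists>x. \<forall>e>0. \<exists>N. \<forall>n\<ge>N. nrm (s n - x) < e"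
    using X.complete[of s] by simp
  then obtain x where x: "\<forall>e>0. \<exists>N. \<forall>n\<ge>N. nrm (s n - x) < e"
    by blast
  have "\<forall>e>0. \<exists>N. \<forall>m\<ge>N. \<forall>n\<ge>N. nrm (S (s m) - S (s n)) < e"
    using Cauchy nrm_S_le_hnorm_graph_inner S_diff s by (metis le_less_trans)
  then have "\<exists>y. \<forall>e>0. \<exists>N. \<forall>n\<ge>N. nrm (S (s n) - y) < e"
    using X.complete[of "\<lambda>n. S (s n)"] by simp
  then obtain y where y: "\<forall>e>0. \<exists>N. \<forall>n\<ge>N. nrm (S (s n) - y) < e"
    by blast
  have xy: "x \<in> DS" "S x = y"
    using S_closed[of s x y] s x y by simp_all
  have "\<exists>N. \<forall>n\<ge>N. hnorm graph_inner (s n - x) < e" if e: "e > 0" for e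
  proof -
    obtain N1 where N1: "\<forall>n\<ge>N1. nrm (s n - x) < e / 2"
      using x[rule_format, OF half_gt_zero[OF e]] by blast
    obtain N2 where N2: "\<forall>n\<ge>N2. nrm (S (s n) - y) < e / 2"
      using y[rule_format, OF half_gt_zero[OF e]] by blast
    have "hnorm graph_inner (s n - x) < e" if n: "n \<ge> max N1 N2" for n
    proof -
      have "hnorm graph_inner (s n - x) \<le> nrm (S (s n) - y) + nrm (s n - x)"
        using hnorm_graph_inner_le[of "s n - x"] S_diff[of "s n" x] s xy by simp
      also have "\<dots> < e / 2 + e / 2"
        using N1 N2 n by (intro add_strict_mono) simp_all
      finally show ?thesis
        by simp
    qed
    then show ?thesis
      by blast
  qed
  with xy show ?thesis
    by blast
qed

lemma hilbert_on_graph_inner: "hilbert_on sm DS graph_inner"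
proof (rule hilbert_on.intro[OF X.complex_module_axioms], unfold_locales)
  show "lin_subspace sm DS"
    using S_linear X.linear_op_subspace by blast
  fix x y z :: 'x and a :: complex and s :: "nat \<Rightarrow> 'x"
  show "x \<in> DS \<Longrightarrow> y \<in> DS \<Longrightarrow> z \<in> DS \<Longrightarrow> graph_inner x (y + z) = graph_inner x y + graph_inner x z"
    by (simp add: graph_inner_def S_add X.inner_add_right)
  show "x \<in> DS \<Longrightarrow> y \<in> DS \<Longrightarrow> graph_inner x (sm a y) = a * graph_inner x y"
    by (simp add: graph_inner_def S_sm X.inner_sm_right distrib_left)
  show "graph_inner y x = cnj (graph_inner x y)"
    using X.inner_cnj_commute[of x y] X.inner_cnj_commute[of "S x" "S y"]
    by (simp add: graph_inner_def)
  show "0 \<le> Re (graph_inner x x)"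
    using X.inner_self_nonneg[of x] X.inner_self_nonneg[of "S x"] by (simp add: graph_inner_def)
  show "graph_inner x x = 0 \<Longrightarrow> x = 0"
    using X.inner_self_nonneg[of x] X.inner_self_nonneg[of "S x"] X.hnorm_eq_zero_iff[of x]
    by (simp add: graph_inner_def hnorm_def complex_eq_iff)
  show "\<forall>n. s n \<in> DS \<Longrightarrow> \<forall>e>0. \<exists>N. \<forall>m\<ge>N. \<forall>n\<ge>N. hnorm graph_inner (s m - s n) < e \<Longrightarrow>
      \<exists>l\<in>DS. \<forall>e>0. \<exists>N. \<forall>n\<ge>N. hnorm graph_inner (s n - l) < e"
    by (rule graph_inner_complete)
qed

sublocale G: hilbert_on sm DS graph_inner
  by (rule hilbert_on_graph_inner)

lemma range_A_plus_id_dense: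
  assumes e: "e > 0"
  shows "\<exists>m\<in>(\<lambda>\<phi>. A \<phi> + \<phi>) ` DA. nrm (x - m) < e"
proof (rule X.dense_if_orthogonal_complement_trivial[OF _ _ _ UNIV_I e])
  show "lin_subspace sm ((\<lambda>\<phi>. A \<phi> + \<phi>) ` DA)"
    by (intro X.lin_subspace_image X.linear_op_plus_id A_linear)
  show "w = 0" if orth: "\<forall>m\<in>(\<lambda>\<phi>. A \<phi> + \<phi>) ` DA. ip w m = 0" for w
  proof -
    have adj: "ip w (A \<phi>) = ip (- w) \<phi>" if "\<phi> \<in> DA" for \<phi>
    proof -
      have "ip w (A \<phi>) + ip w \<phi> = 0"
        using orth that by (simp add: X.inner_add_right)
      then show ?thesis
        by (simp add: X.inner_minus_left eq_neg_iff_add_eq_0)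
    qed
    then have w: "w \<in> DA"
      using A_adj_dom unfolding adj_dom_def by blast
    \<comment> \<open>so \<open>A w = - w\<close>, which the lower bound \<open>A \<ge> \<epsilon>\<close> forbids unless \<open>w = 0\<close>\<close>
    have "Re (ip w (A w)) = - Re (ip w w)"
      using adj[OF w] by (simp add: X.inner_minus_left)
    moreover have "\<epsilon> * Re (ip w w) \<le> Re (ip w (A w))"
      using A_lower w by blast
    moreover have "0 \<le> \<epsilon> * Re (ip w w)"
      using eps_pos X.inner_self_nonneg[of w] by simp
    ultimately have "Re (ip w w) = 0"
      using X.inner_self_nonneg[OF UNIV_I, of w] by linarith
    then show "w = 0"
      using X.hnorm_eq_zero_iff[of w] by (simp add: hnorm_def)
  qed
qed simp

lemma DA_dense_graph_norm:
  assumes x: "x \<in> DS" and e: "e > 0"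
  shows "\<exists>\<phi>\<in>DA. hnorm graph_inner (x - \<phi>) < e"
proof (rule G.dense_if_orthogonal_complement_trivial[OF _ _ _ x e])
  show "lin_subspace sm DA"
    using A_linear X.linear_op_subspace by blast
  show "DA \<subseteq> DS"
    using DA_DS by blast
  fix w
  assume w: "w \<in> DS" and orth: "\<forall>m\<in>DA. graph_inner w m = 0"
  have "ip w (A \<phi> + \<phi>) = graph_inner w \<phi>" if "\<phi> \<in> DA" for \<phi>
    using S_symmetric[OF S_DA_DS[OF that] w] S_S[OF that]
    by (simp add: graph_inner_def X.inner_add_right)
  then have "\<forall>m\<in>(\<lambda>\<phi>. A \<phi> + \<phi>) ` DA. ip w m = 0"
    using orth by simp
  then show "w = 0"
    using eq_zero_if_orthogonal_to_dense range_A_plus_id_dense by blast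
qed

lemma S_lower_bound_DA:
  assumes \<phi>: "\<phi> \<in> DA"
  shows "sqrt \<epsilon> * nrm \<phi> \<le> nrm (S \<phi>)"
proof (rule power2_le_imp_le)
  have "(nrm (S \<phi>))\<^sup>2 = Re (ip \<phi> (A \<phi>))"
    using S_symmetric[OF S_DA_DS[OF \<phi>] DA_DS[OF \<phi>]] S_S[OF \<phi>] X.hnorm_sq by simp
  then show "(sqrt \<epsilon> * nrm \<phi>)\<^sup>2 \<le> (nrm (S \<phi>))\<^sup>2"
    using A_lower \<phi> X.hnorm_sq eps_pos by (simp add: power_mult_distrib)
qed simp

lemma S_lower_bound:
  assumes x: "x \<in> DS"
  shows "sqrt \<epsilon> * nrm x \<le> nrm (S x)"
proof (rule field_le_epsilon)
  fix e :: real
  assume e: "0 < e"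
  define e' where "e' = e / (1 + sqrt \<epsilon>)"
  have "1 + sqrt \<epsilon> > 0"
    using eps_pos by (simp add: add_pos_nonneg)
  then have "e' > 0" "(1 + sqrt \<epsilon>) * e' = e"
    using e by (simp_all add: e'_def)
  then have e': "e' > 0" "e' + sqrt \<epsilon> * e' = e"
    by (simp_all add: algebra_simps)
  obtain \<phi> where \<phi>: "\<phi> \<in> DA" "hnorm graph_inner (x - \<phi>) < e'"
    using DA_dense_graph_norm[OF x e'(1)] by blast
  have close: "nrm (x - \<phi>) < e'" "nrm (S x - S \<phi>) < e'"
    using \<phi> nrm_le_hnorm_graph_inner nrm_S_le_hnorm_graph_inner S_diff[OF x DA_DS[OF \<phi>(1)]]
    by (metis le_less_trans)+
  have "sqrt \<epsilon> * nrm x \<le> sqrt \<epsilon> * (nrm \<phi> + e')"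
    using X.hnorm_triangle[of \<phi> "x - \<phi>"] close eps_pos by (intro mult_left_mono) simp_all
  also have "\<dots> \<le> nrm (S \<phi>) + sqrt \<epsilon> * e'"
    using S_lower_bound_DA[OF \<phi>(1)] by (simp add: distrib_left)
  also have "nrm (S \<phi>) \<le> nrm (S x) + e'"
    using X.hnorm_triangle[of "S x" "S \<phi> - S x"] X.hnorm_minus_commute[of "S x" "S \<phi>"] close
    by simp
  finally show "sqrt \<epsilon> * nrm x \<le> nrm (S x) + e"
    using e'(2) by simp
qed

end

section \<open>One-sided derivatives\<close>

lemma right_derivative_upper_bound:
  fixes f :: "real \<Rightarrow> real"
  assumes f: "(f has_real_derivative D) (at x within {x..})" and D: "D < c"
  shows "\<exists>\<delta>>0. \<forall>h. 0 < h \<and> h < \<delta> \<longrightarrow> f (x + h) \<le> f x + c * h"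
proof -
  have "\<forall>e>0. \<exists>d>0. \<forall>y\<in>{x..}. y \<noteq> x \<and> dist y x < d \<longrightarrow> dist ((f y - f x) / (y - x)) D < e"
    using f unfolding has_field_derivative_iff tendsto_iff eventually_at by blast
  then obtain d where d: "d > 0"
    "\<forall>y\<in>{x..}. y \<noteq> x \<and> dist y x < d \<longrightarrow> dist ((f y - f x) / (y - x)) D < c - D"
    using D by (meson diff_gt_0_iff_gt)
  have "f (x + h) \<le> f x + c * h" if h: "0 < h" "h < d" for h
  proof -
    have "dist ((f (x + h) - f x) / h) D < c - D"
      using d(2)[rule_format, of "x + h"] h by (simp add: dist_real_def)
    then have "(f (x + h) - f x) / h < c"
      by (simp add: dist_real_def)
    then show ?thesis
      using h by (simp add: divide_less_eq mult.commute)
  qed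
  with d(1) show ?thesis
    by blast
qed

lemma has_real_derivative_right_if_quotient_close:
  fixes f :: "real \<Rightarrow> real"
  assumes "\<forall>e>0. \<exists>\<delta>>0. \<forall>h. 0 < h \<and> h < \<delta> \<longrightarrow> \<bar>f (x + h) - f x - h * D\<bar> \<le> e * h"
  shows "(f has_real_derivative D) (at x within {x..})"
  unfolding has_field_derivative_iff tendsto_iff eventually_at
proof (intro allI impI)
  fix e :: real
  assume e: "e > 0"
  obtain \<delta> where \<delta>: "\<delta> > 0" "\<forall>h. 0 < h \<and> h < \<delta> \<longrightarrow> \<bar>f (x + h) - f x - h * D\<bar> \<le> e / 2 * h"
    using assms half_gt_zero[OF e] by blast
  have "dist ((f y - f x) / (y - x)) D < e" if y: "y \<in> {x..}" "y \<noteq> x \<and> dist y x < \<delta>" for y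
  proof -
    define h where "h = y - x"
    have h: "0 < h" "h < \<delta>" "y = x + h"
      using y by (auto simp: h_def dist_real_def)
    then have "\<bar>f y - f x - h * D\<bar> \<le> e / 2 * h"
      using \<delta>(2) by blast
    then have "\<bar>(f y - f x) / h - D\<bar> \<le> e / 2"
      using h(1) by (simp add: divide_simps abs_divide) (simp add: algebra_simps)
    then show ?thesis
      using e by (simp add: dist_real_def h_def[symmetric])
  qed
  with \<delta>(1) show "\<exists>d>0. \<forall>y\<in>{x..}. y \<noteq> x \<and> dist y x < d \<longrightarrow> dist ((f y - f x) / (y - x)) D < e"
    by blast
qed

lemma le_at_right_endpoint:
  fixes f g :: "real \<Rightarrow> real"
  assumes f: "continuous_on {a..s} f" and g: "continuous_on {a..s} g" and "a < s"
    and le: "\<And>y. a \<le> y \<Longrightarrow> y < s \<Longrightarrow> f y \<le> g y"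
  shows "f s \<le> g s"
proof -
  have "closed {x \<in> {a..s}. f x \<le> g x}"
    using f g by (intro continuous_on_closed_Collect_le) simp_all
  moreover have "{a..<s} \<subseteq> {x \<in> {a..s}. f x \<le> g x}"
    using le by auto
  ultimately have "closure {a..<s} \<subseteq> {x \<in> {a..s}. f x \<le> g x}"
    by (rule closure_minimal[rotated])
  moreover have "s \<in> closure {a..<s}"
    using \<open>a < s\<close> by simp
  ultimately have "s \<in> {x \<in> {a..s}. f x \<le> g x}"
    by (rule subsetD)
  then show ?thesis
    by simp
qed

text \<open>The supremum of the points up to which \<open>f\<close> stays below the line of slope \<open>c > 0\<close> is
  reached by continuity and cannot lie before \<open>b\<close> because of the right derivative.\<close>

lemma nonincreasing_if_right_derivative_nonpos:
  fixes f :: "real \<Rightarrow> real"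
  assumes ab: "a \<le> b" and cont: "continuous_on {a..b} f"
    and deriv: "\<And>x. a \<le> x \<Longrightarrow> x < b \<Longrightarrow> (f has_real_derivative f' x) (at x within {x..})"
    and nonpos: "\<And>x. a \<le> x \<Longrightarrow> x < b \<Longrightarrow> f' x \<le> 0"
  shows "f b \<le> f a"
proof (rule field_le_epsilon)
  fix e :: real
  assume e: "0 < e"
  define c where "c = e / (b - a + 1)"
  have c: "c > 0" "c * (b - a) \<le> e"
    using e ab by (simp_all add: c_def divide_simps)
  define P where "P x \<longleftrightarrow> f x \<le> f a + c * (x - a)" for x
  define K where "K = {x \<in> {a..b}. \<forall>y\<in>{a..x}. P y}"
  define s where "s = Sup K"
  have aK: "a \<in> K"
    using ab by (simp add: K_def P_def)
  have bdd: "bdd_above K"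
    by (rule bdd_aboveI[of _ b]) (simp add: K_def)
  have "s \<le> b"
    unfolding s_def
  proof (rule cSup_least)
    show "K \<noteq> {}"
      using aK by blast
  qed (simp add: K_def)
  with cSup_upper[OF aK bdd] have s: "a \<le> s" "s \<le> b"
    by (simp_all add: s_def)
  have below: "P y" if y: "a \<le> y" "y < s" for y
  proof -
    obtain x where "x \<in> K" "y < x"
      using less_cSupE[of y K] y(2) aK unfolding s_def by blast
    then show ?thesis
      using y(1) by (simp add: K_def)
  qed
  have Ps: "P s"
  proof (cases "a = s")
    case False
    show ?thesis
      unfolding P_def
    proof (rule le_at_right_endpoint[where g = "\<lambda>x. f a + c * (x - a)"])
      show "continuous_on {a..s} f"
        by (rule continuous_on_subset[OF cont]) (use s(2) in auto)
      show "continuous_on {a..s} (\<lambda>x. f a + c * (x - a))"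
        by (intro continuous_intros)
      show "a < s"
        using False s(1) by simp
      show "f y \<le> f a + c * (y - a)" if "a \<le> y" "y < s" for y
        using below[OF that] by (simp add: P_def)
    qed
  qed (simp add: P_def)
  have "s = b"
  proof (rule ccontr)
    assume "s \<noteq> b"
    with s have "s < b"
      by simp
    then obtain \<delta> where \<delta>: "\<delta> > 0" "\<forall>h. 0 < h \<and> h < \<delta> \<longrightarrow> f (s + h) \<le> f s + c * h"
      using right_derivative_upper_bound[OF deriv] nonpos s c(1) by (meson le_less_trans)
    define h where "h = min \<delta> (b - s) / 2"
    have h: "0 < h" "h < \<delta>" "s + h \<le> b"
      using \<delta>(1) \<open>s < b\<close> unfolding h_def min_def by (auto simp: field_simps)
    have "P y" if y: "a \<le> y" "y \<le> s + h" for y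
    proof (cases "y \<le> s")
      case True
      then show ?thesis
        using below Ps y(1) by (cases "y = s") auto
    next
      case False
      then have "f y \<le> f s + c * (y - s)"
        using \<delta>(2)[rule_format, of "y - s"] y h by simp
      then show ?thesis
        using Ps by (simp add: P_def algebra_simps)
    qed
    then have "s + h \<in> K"
      using s h by (simp add: K_def)
    then have "s + h \<le> s"
      using bdd unfolding s_def by (rule cSup_upper)
    with h show False
      by simp
  qed
  with Ps c show "f b \<le> f a + e"
    by (simp add: P_def)
qed

context coercive_root
begin

abbreviation "Yn \<equiv> Ynorm ip S"

lemma Yset_iff: "p \<in> Yset DS \<longleftrightarrow> fst p \<in> DS"
  by (cases p) (simp add: Yset_def)

lemma Yset_diff [simp]: "p \<in> Yset DS \<Longrightarrow> p' \<in> Yset DS \<Longrightarrow> p - p' \<in> Yset DS"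
  and Yset_Ysm [simp]: "p \<in> Yset DS \<Longrightarrow> Ysm sm a p \<in> Yset DS"
  by (simp_all add: Yset_iff Ysm_def)

lemma Ynorm_sq: "(Yn p)\<^sup>2 = (nrm (S (fst p)))\<^sup>2 + (nrm (snd p))\<^sup>2"
  and Ynorm_nonneg [simp]: "0 \<le> Yn p"
  and nrm_S_fst_le_Ynorm: "nrm (S (fst p)) \<le> Yn p"
  and nrm_snd_le_Ynorm: "nrm (snd p) \<le> Yn p"
  and Ynorm_le_sum: "Yn p \<le> nrm (S (fst p)) + nrm (snd p)"
  by (simp_all add: Ynorm_def real_sqrt_sum_squares_ge1 real_sqrt_sum_squares_ge2
      sqrt_sum_squares_le_sum)

lemma Ynorm_triangle:
  assumes p: "p \<in> Yset DS" and p': "p' \<in> Yset DS"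
  shows "Yn (p + p') \<le> Yn p + Yn p'"
proof -
  have "nrm (S (fst (p + p'))) \<le> nrm (S (fst p)) + nrm (S (fst p'))"
    using p p' X.hnorm_triangle[of "S (fst p)" "S (fst p')"] by (simp add: Yset_iff S_add)
  moreover have "nrm (snd (p + p')) \<le> nrm (snd p) + nrm (snd p')"
    using X.hnorm_triangle[of "snd p" "snd p'"] by simp
  ultimately have "Yn (p + p')
      \<le> sqrt ((nrm (S (fst p)) + nrm (S (fst p')))\<^sup>2 + (nrm (snd p) + nrm (snd p'))\<^sup>2)"
    unfolding Ynorm_def by (intro real_sqrt_le_mono add_mono power_mono) simp_all
  also have "\<dots> \<le> Yn p + Yn p'"
    unfolding Ynorm_def by (rule real_sqrt_sum_squares_triangle_ineq)
  finally show ?thesis .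
qed

lemma Ynorm_minus_commute:
  assumes p: "p \<in> Yset DS" and p': "p' \<in> Yset DS"
  shows "Yn (p - p') = Yn (p' - p)"
proof -
  have "fst p - fst p' \<in> DS"
    using p p' by (simp add: Yset_iff)
  then have "nrm (S (fst p - fst p')) = nrm (S (fst p' - fst p))"
    using X.hnorm_minus_commute[of "S (fst p)" "S (fst p')"] p p' by (simp add: Yset_iff S_diff)
  then show ?thesis
    using X.hnorm_minus_commute[of "snd p" "snd p'"] by (simp add: Ynorm_def)
qed

definition has_right_deriv :: "(real \<Rightarrow> 'x) \<Rightarrow> 'x \<Rightarrow> real \<Rightarrow> bool" where
  "has_right_deriv x y t \<longleftrightarrow> (\<forall>e>0. \<exists>\<delta>>0. \<forall>h. 0 < h \<and> h < \<delta> \<longrightarrow>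
     nrm (sm (complex_of_real (1 / h)) (x (t + h) - x t) - y) < e)"

lemma has_right_deriv_if_dominated:
  fixes F :: "real \<Rightarrow> real"
  assumes F: "\<forall>e>0. \<exists>\<delta>>0. \<forall>h. 0 < h \<and> h < \<delta> \<longrightarrow> F h < e" and K: "K > 0"
    and le: "\<And>h. 0 < h \<Longrightarrow> nrm (sm (complex_of_real (1 / h)) (x (t + h) - x t) - y) \<le> K * F h"
  shows "has_right_deriv x y t"
  unfolding has_right_deriv_def
proof (intro allI impI)
  fix e :: real
  assume "e > 0"
  then obtain \<delta> where \<delta>: "\<delta> > 0" "\<forall>h. 0 < h \<and> h < \<delta> \<longrightarrow> F h < e / K"
    using F K by (metis divide_pos_pos)
  have "nrm (sm (complex_of_real (1 / h)) (x (t + h) - x t) - y) < e" if h: "0 < h" "h < \<delta>" for h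
  proof -
    have "F h < e / K"
      using \<delta>(2) h by blast
    then have "K * F h < e"
      using K by (simp add: pos_less_divide_eq mult.commute)
    with le[OF h(1)] show ?thesis
      by simp
  qed
  with \<delta>(1) show "\<exists>\<delta>>0. \<forall>h. 0 < h \<and> h < \<delta> \<longrightarrow> nrm (sm (complex_of_real (1 / h)) (x (t + h) - x t) - y) < e"
    by blast
qed

lemma nrm_sq_add_sm_of_real:
  "(nrm (a + sm (complex_of_real h) w))\<^sup>2 = (nrm a)\<^sup>2 + 2 * h * Re (ip a w) + h\<^sup>2 * (nrm w)\<^sup>2"
  using X.inner_self_add_sm[of a w "complex_of_real h"] by (simp add: X.hnorm_sq)

lemma nrm_sq_increment_le:
  assumes h: "0 < h" and r: "nrm r \<le> \<eta>" and \<eta>: "\<eta> \<le> 1"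
  shows "\<bar>(nrm (a + sm (complex_of_real h) (y + r)))\<^sup>2 - (nrm a)\<^sup>2 - h * (2 * Re (ip a y))\<bar>
    \<le> 2 * h * (nrm a * \<eta>) + h\<^sup>2 * (nrm y + 1)\<^sup>2"
proof -
  have eq: "(nrm (a + sm (complex_of_real h) (y + r)))\<^sup>2 - (nrm a)\<^sup>2 - h * (2 * Re (ip a y))
      = 2 * h * Re (ip a r) + h\<^sup>2 * (nrm (y + r))\<^sup>2"
    by (simp add: nrm_sq_add_sm_of_real X.inner_add_right algebra_simps)
  have "\<bar>Re (ip a r)\<bar> \<le> nrm a * nrm r"
    using X.abs_Re_inner_le[of a r] by simp
  also have "\<dots> \<le> nrm a * \<eta>"
    using r by (rule mult_left_mono) simp
  finally have "\<bar>2 * h * Re (ip a r)\<bar> \<le> 2 * h * (nrm a * \<eta>)"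
    using h by (simp add: abs_mult)
  moreover have "(nrm (y + r))\<^sup>2 \<le> (nrm y + 1)\<^sup>2"
    using X.hnorm_triangle[of y r] r \<eta> by (intro power_mono) simp_all
  then have "h\<^sup>2 * (nrm (y + r))\<^sup>2 \<le> h\<^sup>2 * (nrm y + 1)\<^sup>2"
    by (rule mult_left_mono) simp
  ultimately show ?thesis
    unfolding eq using abs_triangle_ineq[of "2 * h * Re (ip a r)" "h\<^sup>2 * (nrm (y + r))\<^sup>2"]
    by simp
qed

lemma has_right_deriv_nrm_sq:
  assumes x: "has_right_deriv x y t"
  shows "((\<lambda>s. (nrm (x s))\<^sup>2) has_real_derivative 2 * Re (ip (x t) y)) (at t within {t..})"
proof (rule has_real_derivative_right_if_quotient_close, intro allI impI)
  fix e :: real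
  assume e: "e > 0"
  define X0 where "X0 = nrm (x t)"
  define Y1 where "Y1 = (nrm y + 1)\<^sup>2"
  have "nrm y + 1 > 0"
    using nrm_nonneg[of y] by linarith
  then have X0: "X0 \<ge> 0" and Y1: "Y1 > 0"
    by (simp_all add: X0_def Y1_def)
  define \<eta> where "\<eta> = min 1 (e / (4 * (X0 + 1)))"
  have \<eta>: "\<eta> > 0" "\<eta> \<le> 1" "X0 * \<eta> \<le> e / 4"
    using e X0 by (auto simp: \<eta>_def min_def divide_simps)
  obtain \<delta>1 where \<delta>1: "\<delta>1 > 0"
    "\<forall>h. 0 < h \<and> h < \<delta>1 \<longrightarrow> nrm (sm (complex_of_real (1 / h)) (x (t + h) - x t) - y) < \<eta>"
    using x \<eta>(1) unfolding has_right_deriv_def by blast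
  define \<delta> where "\<delta> = min \<delta>1 (e / (2 * Y1))"
  have "\<bar>(nrm (x (t + h)))\<^sup>2 - (nrm (x t))\<^sup>2 - h * (2 * Re (ip (x t) y))\<bar> \<le> e * h"
    if h: "0 < h" "h < \<delta>" for h
  proof -
    define r where "r = sm (complex_of_real (1 / h)) (x (t + h) - x t) - y"
    have "sm (complex_of_real h) (y + r) = x (t + h) - x t"
      using h by (simp add: r_def X.sm_assoc X.sm_one flip: of_real_mult)
    then have xth: "x (t + h) = x t + sm (complex_of_real h) (y + r)"
      by simp
    have "nrm r < \<eta>"
      using \<delta>1(2) h by (simp add: r_def \<delta>_def)
    then have "\<bar>(nrm (x (t + h)))\<^sup>2 - (nrm (x t))\<^sup>2 - h * (2 * Re (ip (x t) y))\<bar>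
        \<le> 2 * h * (X0 * \<eta>) + h * (h * Y1)"
      using nrm_sq_increment_le[OF h(1) less_imp_le \<eta>(2), of r "x t" y]
      by (simp add: xth X0_def Y1_def power2_eq_square)
    also have "\<dots> \<le> 2 * h * (e / 4) + h * (e / 2)"
      using h \<eta>(3) Y1 by (intro add_mono mult_left_mono) (simp_all add: \<delta>_def field_simps)
    finally show ?thesis
      by (simp add: algebra_simps)
  qed
  moreover have "\<delta> > 0"
    using \<delta>1(1) e Y1 by (simp add: \<delta>_def)
  ultimately show "\<exists>\<delta>>0. \<forall>h. 0 < h \<and> h < \<delta> \<longrightarrow>
      \<bar>(nrm (x (t + h)))\<^sup>2 - (nrm (x t))\<^sup>2 - h * (2 * Re (ip (x t) y))\<bar> \<le> e * h"
    by blast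
qed

end

text \<open>With \<open>x\<^sub>0 = E(0)\<^sup>1\<^sup>/\<^sup>2\<close>, \<open>y\<^sub>0 = \<epsilon>\<^sup>1\<^sup>/\<^sup>2 \<parallel>u(0)\<parallel>\<close>, \<open>s = \<epsilon>\<^sup>1\<^sup>/\<^sup>2 t\<close>, \<open>m = e\<^sup>\<mu>\<^sup>t\<close>, this turns the energy estimate
  into the claimed bound; \<open>3 \<le> e\<^sup>2\<close> is where the constant \<open>e\<close> comes from.\<close>

lemma exp1_growth_bound:
  fixes x0 y0 s m Y P :: real
  assumes x0: "x0 \<ge> 0" and y0: "y0 \<ge> 0" and s: "s \<ge> 1" and m: "m \<ge> 1"
    and Y: "Y^2 = x0^2 + y0^2" "Y \<ge> 0"
    and P: "P \<le> m^2 * x0^2 + (y0 + m * s * x0)^2"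
  shows "P \<le> (exp 1 * s * m * Y)^2"
proof -
  have "y0 + m * s * x0 \<le> m * (y0 + s * x0)"
    using y0 m by (simp add: distrib_left mult.assoc mult_le_cancel_right1 mult_left_le_one_le)
  then have "(y0 + m * s * x0)^2 \<le> (m * (y0 + s * x0))^2"
    using x0 y0 s m by (intro power_mono) simp_all
  also have "\<dots> = m^2 * (y0 + s * x0)^2" by (simp add: power_mult_distrib)
  also have "(y0 + s * x0)^2 \<le> 2 * y0^2 + 2 * (s * x0)^2"
  proof -
    have "0 \<le> (y0 - s * x0)^2" by simp
    then show ?thesis by (simp add: power2_eq_square algebra_simps)
  qed
  finally have "P \<le> m^2 * x0^2 + m^2 * (2 * y0^2 + 2 * (s * x0)^2)"
    using P by (smt (verit) mult_left_mono zero_le_power2)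
  also have "\<dots> = m^2 * (x0^2 + 2 * y0^2 + 2 * s^2 * x0^2)" by (simp add: algebra_simps power_mult_distrib)
  also have "x0^2 + 2 * y0^2 + 2 * s^2 * x0^2 \<le> 3 * s^2 * (x0^2 + y0^2)"
  proof -
    have s2: "1 \<le> s^2" using s by (simp add: one_le_power)
    have "1 * x0^2 \<le> s^2 * x0^2" using s2 by (rule mult_right_mono) simp
    moreover have "2 * y0^2 \<le> (3 * s^2) * y0^2" using s2 by (intro mult_right_mono) simp_all
    ultimately show ?thesis by (simp add: algebra_simps)
  qed
  then have "m^2 * (x0^2 + 2 * y0^2 + 2 * s^2 * x0^2) \<le> m^2 * (3 * s^2 * (x0^2 + y0^2))"
    by (rule mult_left_mono) simp
  also have "\<dots> = 3 * (s^2 * m^2 * Y^2)" using Y by (simp add: algebra_simps)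
  also have "\<dots> \<le> (exp 1)^2 * (s^2 * m^2 * Y^2)"
  proof (rule mult_right_mono)
    have "2 \<le> exp (1::real)" using exp_ge_add_one_self[of 1] by simp
    then have "2^2 \<le> (exp (1::real))^2" by (rule power_mono) simp
    then show "3 \<le> (exp (1::real))^2" by simp
  qed simp
  also have "\<dots> = (exp 1 * s * m * Y)^2" by (simp add: power_mult_distrib)
  finally show ?thesis .
qed

section \<open>The semigroups \<open>T\<^sub>\<plusminus>\<close>\<close>

text \<open>\<open>c = - \<i>\<close> gives \<open>G\<^sub>+\<close> and \<open>c = \<i>\<close> gives \<open>G\<^sub>-\<close>. Of \<open>B\<close> only the bound \<open>\<mu>\<close> on
  \<open>\<bar>Im \<langle>v|B v\<rangle>\<bar>\<close> enters; it holds with \<open>\<mu> = 0\<close> for symmetric and \<open>\<mu> = \<parallel>B\<parallel>\<close> for bounded \<open>B\<close>.\<close>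

locale wave_semigroup = coercive_root sm ip DA A DS S \<epsilon>
  for sm :: "complex \<Rightarrow> 'x::ab_group_add \<Rightarrow> 'x" and ip DA A DS S \<epsilon> +
  fixes B :: "'x \<Rightarrow> 'x" and c :: complex and T :: "real \<Rightarrow> 'x \<times> 'x \<Rightarrow> 'x \<times> 'x" and \<mu> :: real
  assumes B_linear: "linear_op sm DS B"
    and c_cases: "c = \<i> \<or> c = - \<i>"
    and T_generated:
      "C0_semigroup_gen sm ip DS S (DA \<times> DS) (Gop sm c A B (\<lambda>\<xi>. sm (complex_of_real (- \<epsilon>)) \<xi>)) T"
    and mu_nonneg: "0 \<le> \<mu>"
    and Im_inner_B: "\<forall>v\<in>DS. \<bar>Im (ip v (B v))\<bar> \<le> \<mu> * (nrm v)\<^sup>2"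
begin

abbreviation "G \<equiv> Gop sm c A B (\<lambda>\<xi>. sm (complex_of_real (- \<epsilon>)) \<xi>)"

definition has_right_deriv_Y :: "(real \<Rightarrow> 'x \<times> 'x) \<Rightarrow> 'x \<times> 'x \<Rightarrow> real \<Rightarrow> bool" where
  "has_right_deriv_Y \<gamma> \<eta> t \<longleftrightarrow> (\<forall>e>0. \<exists>\<delta>>0. \<forall>h. 0 < h \<and> h < \<delta> \<longrightarrow>
     Yn (Ysm sm (complex_of_real (1 / h)) (\<gamma> (t + h) - \<gamma> t) - \<eta>) < e)"

lemma T_Yset: "t \<ge> 0 \<Longrightarrow> \<xi> \<in> Yset DS \<Longrightarrow> T t \<xi> \<in> Yset DS"
  and T_add: "t \<ge> 0 \<Longrightarrow> \<xi> \<in> Yset DS \<Longrightarrow> \<eta> \<in> Yset DS \<Longrightarrow> T t (\<xi> + \<eta>) = T t \<xi> + T t \<eta>"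
  and T_Ysm: "t \<ge> 0 \<Longrightarrow> \<xi> \<in> Yset DS \<Longrightarrow> T t (Ysm sm a \<xi>) = Ysm sm a (T t \<xi>)"
  and T_bounded: "t \<ge> 0 \<Longrightarrow> \<exists>M. \<forall>\<xi>\<in>Yset DS. Yn (T t \<xi>) \<le> M * Yn \<xi>"
  and T_zero: "\<xi> \<in> Yset DS \<Longrightarrow> T 0 \<xi> = \<xi>"
  and T_add_time: "s \<ge> 0 \<Longrightarrow> t \<ge> 0 \<Longrightarrow> \<xi> \<in> Yset DS \<Longrightarrow> T (s + t) \<xi> = T s (T t \<xi>)"
  and T_continuous: "\<xi> \<in> Yset DS \<Longrightarrow> t \<ge> 0 \<Longrightarrow> e > 0 \<Longrightarrow>
    \<exists>\<delta>>0. \<forall>s\<ge>0. \<bar>s - t\<bar> < \<delta> \<longrightarrow> Yn (T s \<xi> - T t \<xi>) < e"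
  using T_generated by (simp_all add: C0_semigroup_gen_def)

lemma generator_domain_iff:
  "\<xi> \<in> Yset DS \<Longrightarrow> \<xi> \<in> DA \<times> DS \<longleftrightarrow> (\<exists>L\<in>Yset DS. has_right_deriv_Y (\<lambda>h. T h \<xi>) L 0)"
  and generator_deriv:
  "\<xi> \<in> DA \<times> DS \<Longrightarrow> has_right_deriv_Y (\<lambda>h. T h \<xi>) (- G \<xi>) 0"
proof -
  have T0: "T 0 \<xi> = \<xi>" if "\<xi> \<in> Yset DS" for \<xi>
    using T_zero that .
  have gen: "\<xi> \<in> Yset DS \<Longrightarrow> (\<xi> \<in> DA \<times> DS \<longleftrightarrow> (\<exists>L\<in>Yset DS. \<forall>e>0. \<exists>\<delta>>0. \<forall>h. 0 < h \<and> h < \<delta> \<longrightarrow>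
      Yn (Ysm sm (complex_of_real (1 / h)) (T h \<xi> - \<xi>) - L) < e)) \<and>
      (\<xi> \<in> DA \<times> DS \<longrightarrow> (\<forall>e>0. \<exists>\<delta>>0. \<forall>h. 0 < h \<and> h < \<delta> \<longrightarrow>
      Yn (Ysm sm (complex_of_real (1 / h)) (T h \<xi> - \<xi>) - (- G \<xi>)) < e))" for \<xi>
    using T_generated by (simp add: C0_semigroup_gen_def)
  show "\<xi> \<in> Yset DS \<Longrightarrow> \<xi> \<in> DA \<times> DS \<longleftrightarrow> (\<exists>L\<in>Yset DS. has_right_deriv_Y (\<lambda>h. T h \<xi>) L 0)"
    using gen[of \<xi>] T0[of \<xi>] by (simp add: has_right_deriv_Y_def)
  show "\<xi> \<in> DA \<times> DS \<Longrightarrow> has_right_deriv_Y (\<lambda>h. T h \<xi>) (- G \<xi>) 0"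
    using gen[of \<xi>] T0[of \<xi>] DA_DS by (auto simp: has_right_deriv_Y_def Yset_iff)
qed

lemma domain_Yset: "\<xi> \<in> DA \<times> DS \<Longrightarrow> \<xi> \<in> Yset DS"
  using DA_DS by (auto simp: Yset_iff)

lemma T_diff: "t \<ge> 0 \<Longrightarrow> \<xi> \<in> Yset DS \<Longrightarrow> \<eta> \<in> Yset DS \<Longrightarrow> T t (\<xi> - \<eta>) = T t \<xi> - T t \<eta>"
  using T_add[of t "\<xi> - \<eta>" \<eta>] by simp

lemma T_bounded_pos:
  assumes "t \<ge> 0"
  obtains M where "M > 0" "\<And>\<xi>. \<xi> \<in> Yset DS \<Longrightarrow> Yn (T t \<xi>) \<le> M * Yn \<xi>"
proof -
  obtain M where M: "\<forall>\<xi>\<in>Yset DS. Yn (T t \<xi>) \<le> M * Yn \<xi>"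
    using T_bounded[OF assms] by blast
  have "Yn (T t \<xi>) \<le> max M 1 * Yn \<xi>" if "\<xi> \<in> Yset DS" for \<xi>
    using M that by (meson Ynorm_nonneg max.cobounded1 mult_right_mono order_trans)
  then show ?thesis
    using that[of "max M 1"] by simp
qed

lemma fst_G: "fst (G p) = - sm (c * \<i>) (snd p)"
  by (simp add: Gop_def Ysm_def Hop_def Bhat_def Vop_def X.sm_assoc X.sm_minus_right X.sm_minus_left)

lemma snd_minus_G:
  "snd (- G p) = - sm c (sm \<i> (A (fst p)) + - B (snd p) + sm \<i> (sm (complex_of_real (- \<epsilon>)) (fst p)))"
  by (simp add: Gop_def Ysm_def Hop_def Bhat_def Vop_def)

lemma minus_G_Yset: "p \<in> DA \<times> DS \<Longrightarrow> - G p \<in> Yset DS"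
  using fst_G[of p] by (auto simp: Yset_iff)

lemma T_commutes_difference_quotient:
  assumes \<xi>: "\<xi> \<in> Yset DS" and \<eta>: "\<eta> \<in> Yset DS" and t: "t \<ge> 0" and h: "h > 0"
  shows "Ysm sm (complex_of_real (1 / h)) (T h (T t \<xi>) - T t \<xi>) - T t \<eta>
    = T t (Ysm sm (complex_of_real (1 / h)) (T h \<xi> - \<xi>) - \<eta>)"
proof -
  have "T h (T t \<xi>) = T t (T h \<xi>)"
    using T_add_time[of h t \<xi>] T_add_time[of t h \<xi>] h t \<xi> by (simp add: add.commute)
  moreover have "T h \<xi> \<in> Yset DS"
    using T_Yset h \<xi> by simp
  then have "T t (Ysm sm (complex_of_real (1 / h)) (T h \<xi> - \<xi>) - \<eta>)
      = Ysm sm (complex_of_real (1 / h)) (T t (T h \<xi>) - T t \<xi>) - T t \<eta>"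
    using t \<xi> \<eta> by (simp only: T_diff T_Ysm Yset_diff Yset_Ysm)
  ultimately show ?thesis
    by simp
qed

text \<open>\<open>T t\<close> commutes with the difference quotients at \<open>0\<close>, and is bounded, so it carries the
  derivative \<open>- G \<xi>\<close> of the orbit of \<open>\<xi>\<close> to a derivative of the orbit of \<open>T t \<xi>\<close>; the
  characterisation of the generator domain then puts \<open>T t \<xi>\<close> into it.\<close>

lemma orbit_in_domain:
  assumes \<xi>: "\<xi> \<in> DA \<times> DS" and t: "t \<ge> 0"
  shows "T t \<xi> \<in> DA \<times> DS"
proof -
  have \<xi>Y: "\<xi> \<in> Yset DS" and G\<xi>: "- G \<xi> \<in> Yset DS"
    using domain_Yset minus_G_Yset \<xi> by blast+
  obtain M where M: "M > 0" "\<And>\<zeta>. \<zeta> \<in> Yset DS \<Longrightarrow> Yn (T t \<zeta>) \<le> M * Yn \<zeta>"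
    using T_bounded_pos[OF t] by blast
  have "has_right_deriv_Y (\<lambda>h. T h (T t \<xi>)) (T t (- G \<xi>)) 0"
    unfolding has_right_deriv_Y_def
  proof (intro allI impI)
    fix e :: real
    assume e: "e > 0"
    obtain \<delta> where \<delta>: "\<delta> > 0"
      "\<forall>h. 0 < h \<and> h < \<delta> \<longrightarrow> Yn (Ysm sm (complex_of_real (1 / h)) (T h \<xi> - \<xi>) - (- G \<xi>)) < e / M"
      using generator_deriv[OF \<xi>] e M(1) T_zero[OF \<xi>Y]
      unfolding has_right_deriv_Y_def by (metis add_0 divide_pos_pos)
    have "Yn (Ysm sm (complex_of_real (1 / h)) (T h (T t \<xi>) - T t \<xi>) - T t (- G \<xi>)) < e"
      if h: "0 < h" "h < \<delta>" for h
    proof -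
      have "T h \<xi> \<in> Yset DS"
        using T_Yset h \<xi>Y by simp
      then have "Ysm sm (complex_of_real (1 / h)) (T h \<xi> - \<xi>) - (- G \<xi>) \<in> Yset DS"
        using \<xi>Y G\<xi> by (intro Yset_diff Yset_Ysm)
      then have "Yn (Ysm sm (complex_of_real (1 / h)) (T h (T t \<xi>) - T t \<xi>) - T t (- G \<xi>))
          \<le> M * Yn (Ysm sm (complex_of_real (1 / h)) (T h \<xi> - \<xi>) - (- G \<xi>))"
        using M(2) T_commutes_difference_quotient[OF \<xi>Y G\<xi> t h(1)] by simp
      also have "\<dots> < e"
        using \<delta>(2) h M(1) by (simp add: pos_less_divide_eq mult.commute)
      finally show ?thesis .
    qed
    with \<delta>(1) show "\<exists>\<delta>>0. \<forall>h. 0 < h \<and> h < \<delta> \<longrightarrow>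
        Yn (Ysm sm (complex_of_real (1 / h)) (T (0 + h) (T t \<xi>) - T 0 (T t \<xi>)) - T t (- G \<xi>)) < e"
      using T_zero T_Yset[OF t \<xi>Y] by auto
  qed
  moreover have "T t (- G \<xi>) \<in> Yset DS" "T t \<xi> \<in> Yset DS"
    using T_Yset t G\<xi> \<xi>Y by simp_all
  ultimately show ?thesis
    using generator_domain_iff by blast
qed

lemma orbit_right_deriv:
  assumes \<xi>: "\<xi> \<in> DA \<times> DS" and t: "t \<ge> 0"
  shows "has_right_deriv_Y (\<lambda>s. T s \<xi>) (- G (T t \<xi>)) t"
proof -
  have "T (t + h) \<xi> = T h (T t \<xi>)" if "h > 0" for h
    using T_add_time[of h t \<xi>] that t domain_Yset[OF \<xi>] by (simp add: add.commute)
  then show ?thesis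
    using generator_deriv[OF orbit_in_domain[OF \<xi> t]] T_zero T_Yset[OF t domain_Yset[OF \<xi>]]
    by (simp add: has_right_deriv_Y_def)
qed

lemma Re_c_le_abs_Im: "Re (c * z) \<le> \<bar>Im z\<bar>"
  using c_cases by auto

lemma energy_deriv_identity:
  assumes u: "u \<in> DA" and v: "v \<in> DS"
  shows "2 * Re (ip (S u) (S (sm (c * \<i>) v))) - \<epsilon> * (2 * Re (ip u (sm (c * \<i>) v)))
       + 2 * Re (ip v (snd (- G (u, v)))) = 2 * Re (c * ip v (B v))"
proof -
  \<comment> \<open>\<open>c \<i> = \<plusminus>1\<close> is real, so conjugating the inner products does not change these real parts\<close>
  have real: "Re (c * \<i> * cnj w) = Re (c * \<i> * w)" for w
    using c_cases by auto
  have e1: "ip (S u) (S (sm (c * \<i>) v)) = c * \<i> * ip (A u) v"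
    using S_symmetric[OF v S_DA_DS[OF u]] S_sm[OF v] S_S[OF u] by (simp add: X.inner_sm_right)
  have e2: "ip u (sm (c * \<i>) v) = c * \<i> * ip u v"
    by (simp add: X.inner_sm_right)
  have e3: "ip v (snd (- G (u, v)))
      = - (c * (\<i> * ip v (A u) - ip v (B v) + \<i> * (complex_of_real (- \<epsilon>) * ip v u)))"
    unfolding snd_minus_G
    by (simp add: X.inner_sm_right X.inner_add_right X.inner_minus_right X.inner_diff_right)
  have "Re (ip v (snd (- G (u, v)))) = - Re (c * \<i> * cnj (ip (A u) v)) + Re (c * ip v (B v))
      + \<epsilon> * Re (c * \<i> * cnj (ip u v))"
    unfolding e3 X.inner_cnj_commute[of "A u" v, simplified] X.inner_cnj_commute[of u v, simplified]
    by (simp add: algebra_simps)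
  then show ?thesis
    unfolding e1 e2 real by simp
qed

end

section \<open>The energy estimate\<close>

locale wave_trajectory = wave_semigroup sm ip DA A DS S \<epsilon> B c T \<mu>
  for sm :: "complex \<Rightarrow> 'x::ab_group_add \<Rightarrow> 'x" and ip DA A DS S \<epsilon> B c T \<mu> +
  fixes \<xi> :: "'x \<times> 'x"
  assumes \<xi>: "\<xi> \<in> DA \<times> DS"
begin

definition u :: "real \<Rightarrow> 'x" where "u r = fst (T r \<xi>)"
definition v :: "real \<Rightarrow> 'x" where "v r = snd (T r \<xi>)"

text \<open>The energy of the wave equation with stiffness \<open>A - \<epsilon> = A\<^sub>0\<close>, i.e.
  \<open>\<parallel>A\<^sub>0\<^sup>1\<^sup>/\<^sup>2 u\<parallel>\<^sup>2 + \<parallel>v\<parallel>\<^sup>2\<close>: the part \<open>H + V\<close> of the generator conserves it, only \<open>B\<close> changes it.\<close>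

definition energy :: "real \<Rightarrow> real" where
  "energy r = (nrm (S (u r)))\<^sup>2 - \<epsilon> * (nrm (u r))\<^sup>2 + (nrm (v r))\<^sup>2"

lemma \<xi>_Yset: "\<xi> \<in> Yset DS"
  using domain_Yset[OF \<xi>] .

lemma T_eq: "T r \<xi> = (u r, v r)"
  by (simp add: u_def v_def)

lemma u_DA: "r \<ge> 0 \<Longrightarrow> u r \<in> DA"
  and u_DS: "r \<ge> 0 \<Longrightarrow> u r \<in> DS"
  and v_DS: "r \<ge> 0 \<Longrightarrow> v r \<in> DS"
  using orbit_in_domain[OF \<xi>, of r] DA_DS by (auto simp: u_def v_def mem_Times_iff)

lemma u_v_deriv:
  assumes r: "r \<ge> 0"
  shows "has_right_deriv (\<lambda>s. S (u s)) (S (sm (c * \<i>) (v r))) r"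
    and "has_right_deriv u (sm (c * \<i>) (v r)) r"
    and "has_right_deriv v (snd (- G (u r, v r))) r"
proof -
  define W where "W h = Ysm sm (complex_of_real (1 / h)) (T (r + h) \<xi> - T r \<xi>) - (- G (T r \<xi>))"
    for h
  have W: "\<forall>e>0. \<exists>\<delta>>0. \<forall>h. 0 < h \<and> h < \<delta> \<longrightarrow> Yn (W h) < e"
    using orbit_right_deriv[OF \<xi> r] by (simp add: has_right_deriv_Y_def W_def)
  have fst_W: "fst (W h) = sm (complex_of_real (1 / h)) (u (r + h) - u r) - sm (c * \<i>) (v r)"
    and snd_W: "snd (W h) = sm (complex_of_real (1 / h)) (v (r + h) - v r) - snd (- G (u r, v r))"
    for h
    using fst_G[of "T r \<xi>"] by (simp_all add: W_def Ysm_def u_def v_def)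
  have fst_W_DS: "fst (W h) \<in> DS" if "h > 0" for h
    using u_DS v_DS r that by (simp add: fst_W)
  show "has_right_deriv (\<lambda>s. S (u s)) (S (sm (c * \<i>) (v r))) r"
  proof (rule has_right_deriv_if_dominated[OF W, of 1])
    fix h :: real
    assume "h > 0"
    then have "sm (complex_of_real (1 / h)) (S (u (r + h)) - S (u r)) - S (sm (c * \<i>) (v r))
        = S (fst (W h))"
      using u_DS v_DS r by (simp add: fst_W S_diff S_sm)
    then show "nrm (sm (complex_of_real (1 / h)) (S (u (r + h)) - S (u r))
        - S (sm (c * \<i>) (v r))) \<le> 1 * Yn (W h)"
      using nrm_S_fst_le_Ynorm[of "W h"] by simp
  qed simp
  show "has_right_deriv u (sm (c * \<i>) (v r)) r"
  proof (rule has_right_deriv_if_dominated[OF W, of "1 / sqrt \<epsilon>"])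
    fix h :: real
    assume "h > 0"
    then have "sqrt \<epsilon> * nrm (fst (W h)) \<le> Yn (W h)"
      using S_lower_bound[OF fst_W_DS] nrm_S_fst_le_Ynorm order_trans by blast
    then show "nrm (sm (complex_of_real (1 / h)) (u (r + h) - u r) - sm (c * \<i>) (v r))
        \<le> 1 / sqrt \<epsilon> * Yn (W h)"
      using eps_pos by (simp add: fst_W field_simps)
  qed (use eps_pos in simp)
  show "has_right_deriv v (snd (- G (u r, v r))) r"
  proof (rule has_right_deriv_if_dominated[OF W, of 1])
    show "nrm (sm (complex_of_real (1 / h)) (v (r + h) - v r) - snd (- G (u r, v r)))
        \<le> 1 * Yn (W h)" for h
      using nrm_snd_le_Ynorm[of "W h"] unfolding snd_W by simp
  qed simp
qed

lemma energy_deriv: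
  assumes r: "r \<ge> 0"
  shows "(energy has_real_derivative 2 * Re (c * ip (v r) (B (v r)))) (at r within {r..})"
proof -
  have "(energy has_real_derivative
      2 * Re (ip (S (u r)) (S (sm (c * \<i>) (v r)))) - \<epsilon> * (2 * Re (ip (u r) (sm (c * \<i>) (v r))))
      + 2 * Re (ip (v r) (snd (- G (u r, v r))))) (at r within {r..})"
    unfolding energy_def[abs_def]
    by (intro DERIV_add DERIV_diff DERIV_cmult has_right_deriv_nrm_sq u_v_deriv r)
  then show ?thesis
    using energy_deriv_identity[OF u_DA[OF r] v_DS[OF r]] by simp
qed

lemma kinetic_le_energy:
  assumes r: "r \<ge> 0"
  shows "(nrm (v r))\<^sup>2 \<le> energy r"
proof -
  have "(sqrt \<epsilon> * nrm (u r))\<^sup>2 \<le> (nrm (S (u r)))\<^sup>2"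
    using S_lower_bound[OF u_DS[OF r]] eps_pos by (intro power_mono) simp_all
  then show ?thesis
    using eps_pos by (simp add: energy_def power_mult_distrib)
qed

lemma energy_deriv_le:
  assumes r: "r \<ge> 0"
  shows "2 * Re (c * ip (v r) (B (v r))) \<le> 2 * \<mu> * energy r"
proof -
  have "Re (c * ip (v r) (B (v r))) \<le> \<mu> * (nrm (v r))\<^sup>2"
    using Re_c_le_abs_Im[of "ip (v r) (B (v r))"] Im_inner_B v_DS[OF r] by (meson order_trans)
  also have "\<dots> \<le> \<mu> * energy r"
    using kinetic_le_energy[OF r] mu_nonneg by (rule mult_left_mono)
  finally show ?thesis
    by simp
qed

lemma continuous_on_if_dominated_by_orbit:
  fixes f :: "real \<Rightarrow> real"
  assumes le: "\<And>r r'. r \<ge> 0 \<Longrightarrow> r' \<ge> 0 \<Longrightarrow> \<bar>f r - f r'\<bar> \<le> K * Yn (T r \<xi> - T r' \<xi>)"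
    and K: "K > 0"
  shows "continuous_on {0..} f"
  unfolding continuous_on_iff
proof (intro ballI allI impI)
  fix r e :: real
  assume r: "r \<in> {0..}" and e: "e > 0"
  obtain \<delta> where \<delta>: "\<delta> > 0" "\<forall>s\<ge>0. \<bar>s - r\<bar> < \<delta> \<longrightarrow> Yn (T s \<xi> - T r \<xi>) < e / K"
    using T_continuous[OF \<xi>_Yset _ divide_pos_pos[OF e K], of r] r by auto
  have "dist (f s) (f r) < e" if s: "s \<in> {0..}" "dist s r < \<delta>" for s
  proof -
    have "K * Yn (T s \<xi> - T r \<xi>) < e"
      using \<delta>(2) s K by (simp add: dist_real_def pos_less_divide_eq mult.commute)
    then show ?thesis
      using le[of s r] r s by (simp add: dist_real_def)
  qed
  with \<delta>(1) show "\<exists>d>0. \<forall>s\<in>{0..}. dist s r < d \<longrightarrow> dist (f s) (f r) < e"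
    by blast
qed

lemma continuous_on_nrm_u: "continuous_on {0..} (\<lambda>r. nrm (u r))"
proof (rule continuous_on_if_dominated_by_orbit)
  fix r r' :: real
  assume r: "r \<ge> 0" "r' \<ge> 0"
  have "sqrt \<epsilon> * \<bar>nrm (u r) - nrm (u r')\<bar> \<le> sqrt \<epsilon> * nrm (u r - u r')"
    using X.hnorm_diff_ge[of "u r" "u r'"] eps_pos by (intro mult_left_mono) simp_all
  also have "\<dots> \<le> nrm (S (u r - u r'))"
    using S_lower_bound u_DS r by simp
  also have "\<dots> \<le> Yn (T r \<xi> - T r' \<xi>)"
    using nrm_S_fst_le_Ynorm[of "T r \<xi> - T r' \<xi>"] by (simp add: u_def)
  finally show "\<bar>nrm (u r) - nrm (u r')\<bar> \<le> 1 / sqrt \<epsilon> * Yn (T r \<xi> - T r' \<xi>)"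
    using eps_pos by (simp add: field_simps)
qed (use eps_pos in simp)

lemma continuous_on_energy: "continuous_on {0..} energy"
proof -
  have "continuous_on {0..} (\<lambda>r. nrm (S (u r)))"
  proof (rule continuous_on_if_dominated_by_orbit[of _ 1])
    fix r r' :: real
    assume r: "r \<ge> 0" "r' \<ge> 0"
    have "\<bar>nrm (S (u r)) - nrm (S (u r'))\<bar> \<le> nrm (S (u r) - S (u r'))"
      by (rule X.hnorm_diff_ge) simp_all
    also have "\<dots> \<le> Yn (T r \<xi> - T r' \<xi>)"
      using nrm_S_fst_le_Ynorm[of "T r \<xi> - T r' \<xi>"] S_diff u_DS r by (simp add: u_def)
    finally show "\<bar>nrm (S (u r)) - nrm (S (u r'))\<bar> \<le> 1 * Yn (T r \<xi> - T r' \<xi>)"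
      by simp
  qed simp
  moreover have "continuous_on {0..} (\<lambda>r. nrm (v r))"
  proof (rule continuous_on_if_dominated_by_orbit[of _ 1])
    fix r r' :: real
    have "\<bar>nrm (v r) - nrm (v r')\<bar> \<le> nrm (v r - v r')"
      by (rule X.hnorm_diff_ge) simp_all
    also have "\<dots> \<le> Yn (T r \<xi> - T r' \<xi>)"
      using nrm_snd_le_Ynorm[of "T r \<xi> - T r' \<xi>"] by (simp add: v_def)
    finally show "\<bar>nrm (v r) - nrm (v r')\<bar> \<le> 1 * Yn (T r \<xi> - T r' \<xi>)"
      by simp
  qed simp
  ultimately show ?thesis
    unfolding energy_def[abs_def] using continuous_on_nrm_u by (intro continuous_intros)
qed

lemma energy_le_exp:
  assumes t: "t \<ge> 0"
  shows "energy t \<le> exp (2 * \<mu> * t) * energy 0"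
proof -
  have "exp (- (2 * \<mu> * t)) * energy t \<le> exp (- (2 * \<mu> * 0)) * energy 0"
  proof (rule nonincreasing_if_right_derivative_nonpos[OF t])
    show "continuous_on {0..t} (\<lambda>r. exp (- (2 * \<mu> * r)) * energy r)"
      using continuous_on_energy by (intro continuous_intros) (auto elim: continuous_on_subset)
    fix r
    assume r: "0 \<le> r" "r < t"
    show "((\<lambda>r. exp (- (2 * \<mu> * r)) * energy r) has_real_derivative
        exp (- (2 * \<mu> * r)) * (2 * Re (c * ip (v r) (B (v r))) - 2 * \<mu> * energy r)) (at r within {r..})"
      by (auto intro!: derivative_eq_intros energy_deriv r simp: algebra_simps)
    show "exp (- (2 * \<mu> * r)) * (2 * Re (c * ip (v r) (B (v r))) - 2 * \<mu> * energy r) \<le> 0"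
      using energy_deriv_le[OF r(1)] by (simp add: mult_nonneg_nonpos)
  qed
  then show ?thesis
    by (simp add: exp_minus field_simps)
qed

lemma energy_nonneg: "r \<ge> 0 \<Longrightarrow> 0 \<le> energy r"
  using kinetic_le_energy[of r] zero_le_power2 order_trans by blast

lemma nrm_v_le:
  assumes r: "0 \<le> r" "r \<le> t"
  shows "nrm (v r) \<le> exp (\<mu> * t) * sqrt (energy 0)"
proof -
  have "nrm (v r) \<le> sqrt (energy r)"
    using kinetic_le_energy[OF r(1)] real_le_rsqrt by blast
  also have "\<dots> \<le> sqrt (exp (2 * \<mu> * r) * energy 0)"
    using energy_le_exp[OF r(1)] by simp
  also have "\<dots> = exp (\<mu> * r) * sqrt (energy 0)"
  proof -
    have "exp (2 * \<mu> * r) = (exp (\<mu> * r))\<^sup>2"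
      by (simp add: power2_eq_square flip: exp_add)
    then show ?thesis
      by (simp add: real_sqrt_mult)
  qed
  also have "\<dots> \<le> exp (\<mu> * t) * sqrt (energy 0)"
    using r mu_nonneg energy_nonneg[of 0] by (intro mult_right_mono) (simp_all add: mult_left_mono)
  finally show ?thesis .
qed

text \<open>\<open>\<parallel>u\<parallel>\<close> need not be differentiable where \<open>u\<close> vanishes, hence the regularisation
  \<open>(\<parallel>u\<parallel>\<^sup>2 + e\<^sup>2)\<^sup>1\<^sup>/\<^sup>2\<close>.\<close>

lemma nrm_u_le:
  assumes t: "t \<ge> 0"
  shows "nrm (u t) \<le> nrm (u 0) + exp (\<mu> * t) * sqrt (energy 0) * t"
proof (rule field_le_epsilon)
  fix e :: real
  assume e: "0 < e"
  define K where "K = exp (\<mu> * t) * sqrt (energy 0)"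
  define k where "k r = sqrt ((nrm (u r))\<^sup>2 + e\<^sup>2) - K * r" for r
  have pos: "(nrm (u r))\<^sup>2 + e\<^sup>2 > 0" for r
    using e by (simp add: add_nonneg_pos)
  have "k t \<le> k 0"
  proof (rule nonincreasing_if_right_derivative_nonpos[OF t])
    show "continuous_on {0..t} k"
      unfolding k_def[abs_def] using continuous_on_nrm_u
      by (intro continuous_intros) (auto elim: continuous_on_subset)
    fix x
    assume x: "0 \<le> x" "x < t"
    define D where "D = 2 * Re (ip (u x) (sm (c * \<i>) (v x)))"
    have "((\<lambda>r. (nrm (u r))\<^sup>2 + e\<^sup>2) has_real_derivative D + 0) (at x within {x..})"
      unfolding D_def by (intro DERIV_add has_right_deriv_nrm_sq u_v_deriv x DERIV_const)
    from DERIV_diff[OF DERIV_chain2[OF DERIV_real_sqrt[OF pos] this]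
        DERIV_cmult[OF DERIV_ident, of K]]
    show "(k has_real_derivative inverse (sqrt ((nrm (u x))\<^sup>2 + e\<^sup>2)) / 2 * D - K) (at x within {x..})"
      unfolding k_def[abs_def] by simp
    have "D \<le> 2 * (nrm (u x) * nrm (v x))"
    proof -
      have "cmod (ip (u x) (sm (c * \<i>) (v x))) = cmod (ip (u x) (v x))"
        using c_cases by (auto simp: X.inner_sm_right norm_mult)
      then show ?thesis
        using complex_Re_le_cmod[of "ip (u x) (sm (c * \<i>) (v x))"] X.Cauchy_Schwarz[of "u x" "v x"]
        by (simp add: D_def)
    qed
    also have "\<dots> \<le> 2 * (sqrt ((nrm (u x))\<^sup>2 + e\<^sup>2) * K)"
      using nrm_v_le[of x t] x real_sqrt_sum_squares_ge1[of "nrm (u x)" e]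
      by (intro mult_left_mono mult_mono) (simp_all add: K_def)
    finally show "inverse (sqrt ((nrm (u x))\<^sup>2 + e\<^sup>2)) / 2 * D - K \<le> 0"
      using pos[of x] by (simp add: field_simps)
  qed
  then have "nrm (u t) \<le> sqrt ((nrm (u 0))\<^sup>2 + e\<^sup>2) + K * t"
    using real_sqrt_sum_squares_ge1[of "nrm (u t)" e] unfolding k_def by linarith
  also have "sqrt ((nrm (u 0))\<^sup>2 + e\<^sup>2) \<le> nrm (u 0) + e"
    using sqrt_sum_squares_le_sum[of "nrm (u 0)" e] e by simp
  finally show "nrm (u t) \<le> nrm (u 0) + exp (\<mu> * t) * sqrt (energy 0) * t + e"
    by (simp add: K_def)
qed

lemma Ynorm_T_le:
  assumes t: "1 / sqrt \<epsilon> \<le> t"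
  shows "Yn (T t \<xi>) \<le> exp 1 * sqrt \<epsilon> * t * exp (\<mu> * t) * Yn \<xi>"
proof -
  have se: "sqrt \<epsilon> > 0"
    using eps_pos by simp
  then have tpos: "t > 0"
    using t by (smt (verit) divide_pos_pos)
  define s where "s = sqrt \<epsilon> * t"
  have s: "s \<ge> 1"
    using t se by (simp add: s_def field_simps)
  define m where "m = exp (\<mu> * t)"
  have m: "m \<ge> 1"
    using mu_nonneg tpos by (simp add: m_def)
  define x0 where "x0 = sqrt (energy 0)"
  define y0 where "y0 = sqrt \<epsilon> * nrm (u 0)"
  have x0: "x0 \<ge> 0" and y0: "y0 \<ge> 0"
    using energy_nonneg[of 0] eps_pos by (simp_all add: x0_def y0_def)
  have uv0: "u 0 = fst \<xi>" "v 0 = snd \<xi>"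
    using T_zero[OF \<xi>_Yset] by (simp_all add: u_def v_def)
  have "(Yn \<xi>)\<^sup>2 = energy 0 + \<epsilon> * (nrm (u 0))\<^sup>2"
    by (simp add: Ynorm_sq energy_def uv0)
  then have Y\<xi>: "(Yn \<xi>)\<^sup>2 = x0\<^sup>2 + y0\<^sup>2"
    using energy_nonneg[of 0] eps_pos by (simp add: x0_def y0_def power_mult_distrib)
  have "(Yn (T t \<xi>))\<^sup>2 = energy t + \<epsilon> * (nrm (u t))\<^sup>2"
    by (simp add: Ynorm_sq energy_def T_eq)
  also have "energy t \<le> m\<^sup>2 * x0\<^sup>2"
    using energy_le_exp[of t] tpos energy_nonneg[of 0]
    by (simp add: m_def x0_def power2_eq_square mult.assoc flip: exp_add)
  also have "\<epsilon> * (nrm (u t))\<^sup>2 \<le> (y0 + m * s * x0)\<^sup>2"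
  proof -
    have "sqrt \<epsilon> * nrm (u t) \<le> sqrt \<epsilon> * (nrm (u 0) + m * x0 * t)"
      using nrm_u_le[of t] tpos se by (simp add: m_def x0_def)
    also have "\<dots> = y0 + m * s * x0"
      by (simp add: y0_def s_def algebra_simps)
    finally have "(sqrt \<epsilon> * nrm (u t))\<^sup>2 \<le> (y0 + m * s * x0)\<^sup>2"
      using se by (intro power_mono) simp_all
    then show ?thesis
      using eps_pos by (simp add: power_mult_distrib)
  qed
  finally have "(Yn (T t \<xi>))\<^sup>2 \<le> m\<^sup>2 * x0\<^sup>2 + (y0 + m * s * x0)\<^sup>2"
    by simp
  then have "(Yn (T t \<xi>))\<^sup>2 \<le> (exp 1 * s * m * Yn \<xi>)\<^sup>2"
    by (rule exp1_growth_bound[OF x0 y0 s m Y\<xi> Ynorm_nonneg])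
  then have "Yn (T t \<xi>) \<le> exp 1 * s * m * Yn \<xi>"
    by (rule power2_le_imp_le) (use s m in simp)
  then show ?thesis
    by (simp add: s_def m_def mult.assoc)
qed

end

context wave_semigroup
begin

lemma Yset_approx_by_domain:
  assumes \<zeta>: "\<zeta> \<in> Yset DS" and e: "e > 0"
  obtains \<eta> where "\<eta> \<in> DA \<times> DS" "Yn (\<zeta> - \<eta>) < e"
proof -
  obtain \<phi> where \<phi>: "\<phi> \<in> DA" "hnorm graph_inner (fst \<zeta> - \<phi>) < e / 2"
    using DA_dense_graph_norm[of "fst \<zeta>" "e / 2"] \<zeta> e by (auto simp: Yset_iff)
  obtain \<psi> where \<psi>: "\<psi> \<in> DS" "nrm (snd \<zeta> - \<psi>) < e / 2"
    using DS_dense[of "e / 2"] e by auto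
  have "Yn (\<zeta> - (\<phi>, \<psi>)) \<le> nrm (S (fst \<zeta> - \<phi>)) + nrm (snd \<zeta> - \<psi>)"
    using Ynorm_le_sum[of "\<zeta> - (\<phi>, \<psi>)"] by simp
  also have "\<dots> < e"
    using \<phi> \<psi> nrm_S_le_hnorm_graph_inner[of "fst \<zeta> - \<phi>"] by simp
  finally show ?thesis
    using that[of "(\<phi>, \<psi>)"] \<phi>(1) \<psi>(1) by simp
qed

text \<open>The bound passes from the generator domain to all of \<open>Y\<close> because \<open>T t\<close> is bounded.\<close>

lemma Ynorm_T_le:
  assumes \<zeta>: "\<zeta> \<in> Yset DS" and t: "1 / sqrt \<epsilon> \<le> t"
  shows "Yn (T t \<zeta>) \<le> exp 1 * sqrt \<epsilon> * t * exp (\<mu> * t) * Yn \<zeta>"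
proof (rule field_le_epsilon)
  fix e :: real
  assume e: "0 < e"
  define K where "K = exp 1 * sqrt \<epsilon> * t * exp (\<mu> * t)"
  have tpos: "t > 0"
    using t eps_pos by (smt (verit) divide_pos_pos real_sqrt_gt_zero)
  then have K: "K \<ge> 0"
    using eps_pos by (simp add: K_def)
  obtain M where M: "M > 0" "\<And>\<xi>. \<xi> \<in> Yset DS \<Longrightarrow> Yn (T t \<xi>) \<le> M * Yn \<xi>"
    using T_bounded_pos[of t] tpos by auto
  define d where "d = e / (K + M)"
  have d: "d > 0" "(K + M) * d = e"
    using e K M(1) by (simp_all add: d_def)
  obtain \<eta> where \<eta>: "\<eta> \<in> DA \<times> DS" "Yn (\<zeta> - \<eta>) < d"
    using Yset_approx_by_domain[OF \<zeta> d(1)] by blast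
  have \<eta>Y: "\<eta> \<in> Yset DS" and diffY: "\<zeta> - \<eta> \<in> Yset DS"
    using domain_Yset[OF \<eta>(1)] \<zeta> by simp_all
  have bound_\<eta>: "Yn (T t \<eta>) \<le> K * Yn \<eta>"
  proof -
    interpret trajectory: wave_trajectory sm ip DA A DS S \<epsilon> B c T \<mu> \<eta>
      by unfold_locales (rule \<eta>(1))
    show ?thesis
      using trajectory.Ynorm_T_le[OF t] by (simp add: K_def)
  qed
  have "Yn (T t \<zeta>) \<le> Yn (T t \<eta>) + Yn (T t (\<zeta> - \<eta>))"
    using T_add[of t \<eta> "\<zeta> - \<eta>"] Ynorm_triangle T_Yset tpos \<eta>Y diffY by simp
  also have "\<dots> \<le> K * Yn \<eta> + M * Yn (\<zeta> - \<eta>)"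
    using bound_\<eta> M(2)[OF diffY] by (rule add_mono)
  also have "K * Yn \<eta> \<le> K * (Yn \<zeta> + Yn (\<zeta> - \<eta>))"
    using Ynorm_triangle[OF \<zeta>, of "\<eta> - \<zeta>"] Ynorm_minus_commute[OF \<eta>Y \<zeta>] \<eta>Y \<zeta> K
    by (intro mult_left_mono) simp_all
  finally have "Yn (T t \<zeta>) \<le> K * Yn \<zeta> + (K + M) * Yn (\<zeta> - \<eta>)"
    by (simp add: algebra_simps)
  also have "(K + M) * Yn (\<zeta> - \<eta>) \<le> e"
    using \<eta>(2) d K M(1) by (metis less_eq_real_def mult_left_mono add_nonneg_nonneg)
  finally show "Yn (T t \<zeta>) \<le> exp 1 * sqrt \<epsilon> * t * exp (\<mu> * t) * Yn \<zeta> + e"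
    by (simp add: K_def)
qed

end

context coercive_root
begin

lemma bdd_above_op_norm_set:
  assumes "bounded_on ip DS B"
  shows "bdd_above {nrm (B \<xi>) | \<xi>. \<xi> \<in> DS \<and> nrm \<xi> \<le> 1}"
proof -
  obtain M where M: "\<forall>\<xi>\<in>DS. nrm (B \<xi>) \<le> M * nrm \<xi>"
    using assms unfolding bounded_on_def by blast
  have "nrm (B \<xi>) \<le> \<bar>M\<bar>" if "\<xi> \<in> DS" "nrm \<xi> \<le> 1" for \<xi>
  proof -
    have "nrm (B \<xi>) \<le> \<bar>M\<bar> * nrm \<xi>"
      using M that(1) by (meson abs_ge_self mult_right_mono nrm_nonneg order_trans)
    also have "\<dots> \<le> \<bar>M\<bar>"
      using that(2) by (simp add: mult_left_le)
    finally show ?thesis .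
  qed
  then show ?thesis
    by (intro bdd_aboveI[of _ "\<bar>M\<bar>"]) blast
qed

lemma op_norm_nonneg:
  assumes bd: "bounded_on ip DS B" and B: "linear_op sm DS B"
  shows "0 \<le> op_norm ip DS B"
proof -
  have "nrm (B 0) \<in> {nrm (B \<xi>) | \<xi>. \<xi> \<in> DS \<and> nrm \<xi> \<le> 1}"
    by (rule CollectI, rule exI[of _ 0]) simp
  then have "nrm (B 0) \<le> op_norm ip DS B"
    unfolding op_norm_def using bdd_above_op_norm_set[OF bd] by (rule cSup_upper)
  then show ?thesis
    using X.linear_op_zero[OF B] by simp
qed

lemma nrm_le_op_norm:
  assumes bd: "bounded_on ip DS B" and B: "linear_op sm DS B" and v: "v \<in> DS"
  shows "nrm (B v) \<le> op_norm ip DS B * nrm v"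
proof (cases "v = 0")
  case True
  then show ?thesis
    using X.linear_op_zero[OF B] by simp
next
  case False
  then have nv: "nrm v > 0"
    using X.hnorm_eq_zero_iff[of v] nrm_nonneg[of v] by (simp add: less_le)
  define w where "w = sm (complex_of_real (1 / nrm v)) v"
  have "nrm w = 1" "nrm (B w) = nrm (B v) / nrm v"
    using X.hnorm_sm[of v] X.hnorm_sm[of "B v"] X.linear_op_sm[OF B v] nv
    by (simp_all add: w_def norm_divide)
  moreover have "w \<in> DS"
    using v by (simp add: w_def)
  ultimately have "nrm (B v) / nrm v \<in> {nrm (B \<xi>) | \<xi>. \<xi> \<in> DS \<and> nrm \<xi> \<le> 1}"
    by force
  then have "nrm (B v) / nrm v \<le> op_norm ip DS B"
    unfolding op_norm_def using bdd_above_op_norm_set[OF bd] by (rule cSup_upper)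
  then show ?thesis
    using nv by (simp add: divide_le_eq)
qed

lemma abs_Im_inner_le_op_norm:
  assumes "bounded_on ip DS B" and "linear_op sm DS B" and v: "v \<in> DS"
  shows "\<bar>Im (ip v (B v))\<bar> \<le> op_norm ip DS B * (nrm v)\<^sup>2"
proof -
  have "\<bar>Im (ip v (B v))\<bar> \<le> nrm v * nrm (B v)"
    using abs_Im_le_cmod X.Cauchy_Schwarz[of v "B v"] order_trans by blast
  also have "\<dots> \<le> nrm v * (op_norm ip DS B * nrm v)"
    using nrm_le_op_norm[OF assms] by (simp add: mult_left_mono)
  finally show ?thesis
    by (simp add: power2_eq_square algebra_simps)
qed

lemma Im_inner_eq_zero_if_symmetric:
  assumes "symmetric_on ip DS B" and "v \<in> DS"
  shows "Im (ip v (B v)) = 0"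
proof -
  have "cnj (ip v (B v)) = ip v (B v)"
    using assms X.inner_cnj_commute[of v "B v"] by (simp add: symmetric_on_def)
  then show ?thesis
    by (metis cnj.sel(2) neg_equal_zero)
qed

lemma wave_semigroups_bound:
  assumes "linear_op sm DS B" and "0 \<le> \<mu>"
    and "\<forall>v\<in>DS. \<bar>Im (ip v (B v))\<bar> \<le> \<mu> * (nrm v)\<^sup>2"
    and "C0_semigroup_gen sm ip DS S (DA \<times> DS)
      (Gop sm (- \<i>) A B (\<lambda>\<xi>. sm (complex_of_real (- \<epsilon>)) \<xi>)) Tp"
    and "C0_semigroup_gen sm ip DS S (DA \<times> DS)
      (Gop sm \<i> A B (\<lambda>\<xi>. sm (complex_of_real (- \<epsilon>)) \<xi>)) Tm"
  shows "\<forall>t\<ge>1 / sqrt \<epsilon>. \<forall>\<xi>\<in>Yset DS.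
    Yn (Tp t \<xi>) \<le> exp 1 * sqrt \<epsilon> * t * exp (\<mu> * t) * Yn \<xi> \<and>
    Yn (Tm t \<xi>) \<le> exp 1 * sqrt \<epsilon> * t * exp (\<mu> * t) * Yn \<xi>"
proof -
  interpret plus: wave_semigroup sm ip DA A DS S \<epsilon> B "- \<i>" Tp \<mu>
    by unfold_locales (use assms in simp_all)
  interpret minus: wave_semigroup sm ip DA A DS S \<epsilon> B \<i> Tm \<mu>
    by unfold_locales (use assms in simp_all)
  show ?thesis
    using plus.Ynorm_T_le minus.Ynorm_T_le by blast
qed

end

theorem theorem16:
  fixes sm :: "complex \<Rightarrow> 'x::ab_group_add \<Rightarrow> 'x"
    and ip :: "'x \<Rightarrow> 'x \<Rightarrow> complex"
    and DA :: "'x set" and A :: "'x \<Rightarrow> 'x"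
    and DA0 :: "'x set" and A0 :: "'x \<Rightarrow> 'x"
    and DS :: "'x set" and S :: "'x \<Rightarrow> 'x"
    and B :: "'x \<Rightarrow> 'x"
    and \<epsilon> a b :: real
    and Tp Tm :: "real \<Rightarrow> 'x \<times> 'x \<Rightarrow> 'x \<times> 'x"
  assumes hilb: "complex_hilbert sm ip"
    and nontriv: "\<exists>x::'x. x \<noteq> 0"
    and eps_pos: "\<epsilon> > 0"
    and A_sa: "self_adjoint sm ip DA A"
    and A_lower: "\<forall>\<xi>\<in>DA. Re (ip \<xi> (A \<xi>)) \<ge> \<epsilon> * Re (ip \<xi> \<xi>)"
    and A0_sa: "self_adjoint sm ip DA0 A0"
    and A0_pos: "positive_op ip DA0 A0"
    and A_eq: "DA = DA0" "\<forall>\<xi>\<in>DA. A \<xi> = A0 \<xi> + sm (complex_of_real \<epsilon>) \<xi>"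
    and sqrtA: "is_pos_sqrt sm ip DS S DA A"
    and B_lin: "linear_op sm DS B"
    and ab: "0 \<le> a" "a < 1"
    and B_rel: "\<forall>\<xi>\<in>DS. (hnorm ip (B \<xi>))\<^sup>2 \<le> a\<^sup>2 * (hnorm ip (S \<xi>))\<^sup>2 + b\<^sup>2 * (hnorm ip \<xi>)\<^sup>2"
    and B_sym_or_bdd: "symmetric_on ip DS B \<or> bounded_on ip DS B"
    and Tp_gen: "C0_semigroup_gen sm ip DS S (DA \<times> DS)
                   (Gop sm (- \<i>) A B (\<lambda>\<xi>. sm (complex_of_real (- \<epsilon>)) \<xi>)) Tp"
    and Tm_gen: "C0_semigroup_gen sm ip DS S (DA \<times> DS)
                   (Gop sm \<i> A B (\<lambda>\<xi>. sm (complex_of_real (- \<epsilon>)) \<xi>)) Tm"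
  shows "(symmetric_on ip DS B \<longrightarrow>
            (\<forall>t\<ge>1 / sqrt \<epsilon>. \<forall>\<xi>\<in>Yset DS.
               Ynorm ip S (Tp t \<xi>) \<le> exp 1 * sqrt \<epsilon> * t * exp (0 * t) * Ynorm ip S \<xi> \<and>
               Ynorm ip S (Tm t \<xi>) \<le> exp 1 * sqrt \<epsilon> * t * exp (0 * t) * Ynorm ip S \<xi>)) \<and>
         (bounded_on ip DS B \<longrightarrow>
            (\<forall>t\<ge>1 / sqrt \<epsilon>. \<forall>\<xi>\<in>Yset DS.
               Ynorm ip S (Tp t \<xi>) \<le> exp 1 * sqrt \<epsilon> * t * exp (op_norm ip DS B * t) * Ynorm ip S \<xi> \<and>
               Ynorm ip S (Tm t \<xi>) \<le> exp 1 * sqrt \<epsilon> * t * exp (op_norm ip DS B * t) * Ynorm ip S \<xi>))"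
proof -
  interpret coercive_root sm ip DA A DS S \<epsilon>
    by (rule coercive_root.intro[OF hilb eps_pos A_sa A_lower sqrtA])
  show ?thesis
  proof (intro conjI impI wave_semigroups_bound[OF B_lin _ _ Tp_gen Tm_gen])
    show "\<forall>v\<in>DS. \<bar>Im (ip v (B v))\<bar> \<le> 0 * (nrm v)\<^sup>2" if "symmetric_on ip DS B"
      using Im_inner_eq_zero_if_symmetric[OF that] by simp
    show "0 \<le> op_norm ip DS B" if "bounded_on ip DS B"
      by (rule op_norm_nonneg[OF that B_lin])
    show "\<forall>v\<in>DS. \<bar>Im (ip v (B v))\<bar> \<le> op_norm ip DS B * (nrm v)\<^sup>2" if "bounded_on ip DS B"
      using abs_Im_inner_le_op_norm[OF that B_lin] by blast
  qed simp
qed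

end
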